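(* Let $A$ be a set with $1\leq|A|\leq\omega$, and suppose that for each $\alpha\in A$, either $X_\alpha=\mathcal{N}$, or $X_\alpha$ is a subspace of $\mathcal{R}_{\mathcal{S}}$ with $|\mathcal{R}_{\mathcal{S}}\setminus X_\alpha|\leq\omega$. Then the Tychonoff product $\prod_{\alpha\in A}X_\alpha$ has a $\pi$-tree.
   Context: $\mathcal{N}$ is the Baire space ${}^{\omega}\omega$ with the product topology ($\omega$ discrete); $\mathcal{R}_{\mathcal{S}}$ is the Sorgenfrey line (reals with the topology generated by $[a,b)$). Neighbourhoods are not necessarily open. ${}^{<\omega}\omega$ is the set of finite sequences of natural numbers. A tree is a strict partial order in which the set of predecessors of every node is well-ordered; a branch is a maximal chain; $\mathrm{sons}(x)$ is the set of immediate successors of $x$; $0$ denotes the least node. A foliage tree is a pair $\mathbf{F}=(T,l)$ with $T$ a tree (skeleton) and $l$ a function on its nodes, $\mathbf{F}_x:=l(x)$; tree notions apply via the skeleton. $\mathrm{shoot}_{\mathbf{F}}(v)=\{\bigcup_{x\in C}\mathbf{F}_x: C\text{ a cofinite subset of }\mathrm{sons}_{\mathbf{F}}(v)\}$; $\mathrm{scope}_{\mathbf{F}}(p)=\{x:p\in\mathbf{F}_x\}$. $\gamma\gg\delta$ means every nonempty $D\in\delta$ contains some nonempty $G\in\gamma$. $\mathbf{F}$ is locally strict if each non-maximal leaf $\mathbf{F}_x$ is the disjoint union of $\mathbf{F}_s$, $s\in\mathrm{sons}(x)$; has strict branches if it has a node and for each branch $B$, $\bigcap_{x\in B}\mathbf{F}_x$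 is a singleton; is open in $X$ if all leaves are open in $X$; is a foliage $\omega,\omega$-tree if its skeleton is order-isomorphic to $({}^{<\omega}\omega,\subsetneq)$. A Baire foliage tree on $X$ is an open in $X$, locally strict foliage $\omega,\omega$-tree with strict branches and $\mathbf{F}_{0_{\mathbf{F}}}=X$. $\mathbf{F}$ grows into $X$ if for every $p\in X$ and neighbourhood $U$ of $p$ there is $z\in\mathrm{scope}_{\mathbf{F}}(p)$ with $\mathrm{shoot}_{\mathbf{F}}(z)\gg\{U\}$. A $\pi$-tree on $X$ is a Baire foliage tree on $X$ that grows into $X$; a space has a $\pi$-tree if there is one on it. *)

theory Defs
  imports "HOL-Analysis.Analysis"
begin

text \<open>Skeleton: the tree of finite sequences of naturals ordered by strict prefix.
  A foliage omega,omega-tree is represented by its leaf function on nat lists.\<close>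

definition tree_less :: "nat list \<Rightarrow> nat list \<Rightarrow> bool" where
  "tree_less x y \<longleftrightarrow> (\<exists>zs. zs \<noteq> [] \<and> y = x @ zs)"

definition sons :: "nat list \<Rightarrow> nat list set" where
  "sons v = {v @ [n] | n. True}"

definition is_chain :: "nat list set \<Rightarrow> bool" where
  "is_chain C \<longleftrightarrow> (\<forall>x\<in>C. \<forall>y\<in>C. x = y \<or> tree_less x y \<or> tree_less y x)"

definition is_branch :: "nat list set \<Rightarrow> bool" where
  "is_branch B \<longleftrightarrow> is_chain B \<and> (\<forall>C. is_chain C \<and> B \<subseteq> C \<longrightarrow> C = B)"

definition shoot :: "(nat list \<Rightarrow> 'a set) \<Rightarrow> nat list \<Rightarrow> 'a set set" where
  "shoot F v = {\<Union>x\<in>C. F x | C. C \<subseteq> sons v \<and> finite (sons v - C)}"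

definition scope :: "(nat list \<Rightarrow> 'a set) \<Rightarrow> 'a \<Rightarrow> nat list set" where
  "scope F p = {x. p \<in> F x}"

definition refines :: "'a set set \<Rightarrow> 'a set set \<Rightarrow> bool" (infix "\<ggreater>" 50) where
  "\<gamma> \<ggreater> \<delta> \<longleftrightarrow> (\<forall>D\<in>\<delta>. D \<noteq> {} \<longrightarrow> (\<exists>G\<in>\<gamma>. G \<noteq> {} \<and> G \<subseteq> D))"

definition locally_strict :: "(nat list \<Rightarrow> 'a set) \<Rightarrow> bool" where
  "locally_strict F \<longleftrightarrow> (\<forall>x. F x = (\<Union>s\<in>sons x. F s) \<and>
      (\<forall>s\<in>sons x. \<forall>t\<in>sons x. s \<noteq> t \<longrightarrow> F s \<inter> F t = {}))"

definition strict_branches :: "(nat list \<Rightarrow> 'a set) \<Rightarrow> bool" where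
  "strict_branches F \<longleftrightarrow> (\<forall>B. is_branch B \<longrightarrow> (\<exists>p. (\<Inter>x\<in>B. F x) = {p}))"

definition baire_foliage_tree :: "'a topology \<Rightarrow> (nat list \<Rightarrow> 'a set) \<Rightarrow> bool" where
  "baire_foliage_tree X F \<longleftrightarrow> (\<forall>x. openin X (F x)) \<and> locally_strict F \<and>
      strict_branches F \<and> F [] = topspace X"

definition is_nbhd :: "'a topology \<Rightarrow> 'a set \<Rightarrow> 'a \<Rightarrow> bool" where
  "is_nbhd X U p \<longleftrightarrow> U \<subseteq> topspace X \<and> (\<exists>V. openin X V \<and> p \<in> V \<and> V \<subseteq> U)"

definition grows_into :: "(nat list \<Rightarrow> 'a set) \<Rightarrow> 'a topology \<Rightarrow> bool" where
  "grows_into F X \<longleftrightarrow> (\<forall>p\<in>topspace X. \<forall>U. is_nbhd X U p \<longrightarrow>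
      (\<exists>z\<in>scope F p. shoot F z \<ggreater> {U}))"

definition pi_tree :: "'a topology \<Rightarrow> (nat list \<Rightarrow> 'a set) \<Rightarrow> bool" where
  "pi_tree X F \<longleftrightarrow> baire_foliage_tree X F \<and> grows_into F X"

definition has_pi_tree :: "'a topology \<Rightarrow> bool" where
  "has_pi_tree X \<longleftrightarrow> (\<exists>F. pi_tree X F)"

definition baire_space :: "(nat \<Rightarrow> nat) topology" where
  "baire_space = product_topology (\<lambda>_. discrete_topology UNIV) UNIV"

definition sorgenfrey :: "real topology" where
  "sorgenfrey = topology_generated_by {{a..<b} | a b. True}"

end

(* Every factor carries a uniform tree: a Baire foliage tree with nonempty leaves such that,
   for a point p and an open V containing p, every sufficiently deep node of even depth that
   contains p has cofinitely many sons inside V. In the Baire space the cylinders form such a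
   tree. In a subspace S of the Sorgenfrey line with countable complement the leaves are the
   sets [a, b) \<inter> S with a in S, each split into intervals accumulating at b, except that at
   depth 2n + 1 an interval containing the n-th point of the complement is split on both sides
   of that point, so that every branch shrinks to a point of S. Uniform trees transfer along
   homeomorphisms. In a countable product the factors are enumerated, and at stage n the first
   n + 1 of them descend two levels each; the moves of a stage are grouped first by the least
   digit they use. A basic open box restricts finitely many factors, so once these are deep
   enough, all sons of large least digit of the current node lie in the box. *)

theory Submission
  imports Defs "HOL-Library.Sublist"
begin

section \<open>Branches of the tree of finite sequences\<close>

lemma tree_less_iff_strict_prefix: "tree_less x y \<longleftrightarrow> strict_prefix x y"
  unfolding tree_less_def strict_prefix_def prefix_def by auto

lemma is_chain_iff_prefix_comparable:
  "is_chain B \<longleftrightarrow> (\<forall>x\<in>B. \<forall>y\<in>B. prefix x y \<or> prefix y x)"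
  unfolding is_chain_def tree_less_iff_strict_prefix by (auto simp: strict_prefix_def)

lemma prefix_nth: "prefix xs ys \<Longrightarrow> i < length xs \<Longrightarrow> xs ! i = ys ! i"
  by (auto simp: prefix_def nth_append)

lemma prefix_chain_initial_segments:
  fixes C :: "'a list set"
  assumes comparable: "\<forall>x\<in>C. \<forall>y\<in>C. prefix x y \<or> prefix y x"
    and unbounded: "\<forall>n. \<exists>y\<in>C. n \<le> length y"
  shows "\<exists>g. \<forall>y\<in>C. y = map g [0..<length y]"
proof -
  define Y where "Y n = (SOME y. y \<in> C \<and> n \<le> length y)" for n
  have Y: "Y n \<in> C" "n \<le> length (Y n)" for n
    using someI_ex[of "\<lambda>y. y \<in> C \<and> n \<le> length y"] unbounded unfolding Y_def by auto
  have "y ! i = Y (Suc i) ! i" if "y \<in> C" "i < length y" for y i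
    using comparable that Y[of "Suc i"] prefix_nth[of y "Y (Suc i)" i] prefix_nth[of "Y (Suc i)" y i]
    by fastforce
  then have "\<forall>y\<in>C. y = map (\<lambda>i. Y (Suc i) ! i) [0..<length y]"
    by (auto intro: nth_equalityI)
  then show ?thesis by blast
qed

lemma branch_insert:
  assumes "is_branch B" and "\<forall>c\<in>B. prefix c t \<or> prefix t c"
  shows "t \<in> B"
proof -
  have "is_chain (insert t B)"
    using assms unfolding is_branch_def is_chain_iff_prefix_comparable by auto
  then show ?thesis
    using assms(1) unfolding is_branch_def by blast
qed

lemma branch_take:
  assumes "is_branch B" and "y \<in> B"
  shows "take n y \<in> B"
proof (rule branch_insert[OF assms(1)], intro ballI)
  fix c assume "c \<in> B"
  then have "prefix c y \<or> prefix y c"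
    using assms unfolding is_branch_def is_chain_iff_prefix_comparable by blast
  then show "prefix c (take n y) \<or> prefix (take n y) c"
  proof
    assume "prefix c y"
    then show ?thesis
      using prefix_same_cases take_is_prefix by blast
  next
    assume "prefix y c"
    then show ?thesis
      using take_is_prefix prefix_order.trans by blast
  qed
qed

lemma branch_unbounded:
  assumes "is_branch B"
  shows "\<exists>y\<in>B. n \<le> length y"
proof (rule ccontr)
  assume "\<not> ?thesis"
  then have "length ` B \<subseteq> {..<n}"
    by auto
  then have bounded: "finite (length ` B)"
    by (rule finite_subset) simp
  have chain: "\<forall>x\<in>B. \<forall>y\<in>B. prefix x y \<or> prefix y x"
    using assms unfolding is_branch_def is_chain_iff_prefix_comparable by blast
  have "[] \<in> B"
    by (rule branch_insert[OF assms]) simp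
  then have "Max (length ` B) \<in> length ` B"
    using Max_in[OF bounded] by blast
  then obtain y where y: "y \<in> B" "length y = Max (length ` B)"
    by (metis imageE)
  have "prefix c (y @ [0])" if "c \<in> B" for c
  proof -
    have "length c \<le> length y"
      using y bounded that by simp
    moreover have "prefix c y \<or> prefix y c"
      using chain y(1) that by blast
    ultimately have "prefix c y"
      by (auto simp: prefix_def)
    then show ?thesis by simp
  qed
  then have "y @ [0] \<in> B"
    using branch_insert[OF assms] by blast
  then have "length (y @ [0]) \<le> Max (length ` B)"
    using bounded by (intro Max_ge imageI)
  with y(2) show False by simp
qed

lemma branch_eq_range_prefixes:
  assumes "is_branch B"
  shows "\<exists>g. B = range (\<lambda>n. map g [0..<n])"
proof -
  have chain: "\<forall>x\<in>B. \<forall>y\<in>B. prefix x y \<or> prefix y x"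
    using assms unfolding is_branch_def is_chain_iff_prefix_comparable by blast
  obtain g where g: "\<forall>y\<in>B. y = map g [0..<length y]"
    using prefix_chain_initial_segments[OF chain] branch_unbounded[OF assms] by blast
  have "map g [0..<n] \<in> B" for n
  proof -
    obtain y where "y \<in> B" "n \<le> length y"
      using branch_unbounded[OF assms] by blast
    moreover from this have "take n y = map g [0..<n]"
      using g by (metis take_map take_upt add_0)
    ultimately show ?thesis
      using branch_take[OF assms] by metis
  qed
  with g show ?thesis by blast
qed

lemma sons_eq_range: "sons v = range (\<lambda>n. v @ [n])"
  unfolding sons_def by auto

section \<open>Baire trees and \<pi>-trees\<close>

lemma grows_intoI:
  fixes F :: "nat list \<Rightarrow> 'x set"
  assumes grows: "\<And>p U. p \<in> topspace X \<Longrightarrow> openin X U \<Longrightarrow> p \<in> U \<Longrightarrow>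
    \<exists>z N. p \<in> F z \<and> F (z @ [N]) \<noteq> {} \<and> (\<forall>j\<ge>N. F (z @ [j]) \<subseteq> U)"
  shows "grows_into F X"
  unfolding grows_into_def
proof (intro ballI allI impI)
  fix p U assume p: "p \<in> topspace X" and "is_nbhd X U p"
  then obtain V where V: "openin X V" "p \<in> V" "V \<subseteq> U"
    unfolding is_nbhd_def by blast
  obtain z N where z: "p \<in> F z" "F (z @ [N]) \<noteq> {}" "\<forall>j\<ge>N. F (z @ [j]) \<subseteq> V"
    using grows[OF p V(1,2)] by blast
  let ?C = "(\<lambda>j. z @ [j]) ` {N..}"
  have "sons z - ?C \<subseteq> (\<lambda>j. z @ [j]) ` {..<N}"
    unfolding sons_eq_range by (auto simp: image_iff not_le)
  then have "finite (sons z - ?C)"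
    by (rule finite_subset) simp
  moreover have "?C \<subseteq> sons z"
    unfolding sons_eq_range by auto
  ultimately have "(\<Union>x\<in>?C. F x) \<in> shoot F z"
    unfolding shoot_def by blast
  moreover have "F (z @ [N]) \<subseteq> (\<Union>x\<in>?C. F x)"
    by auto
  moreover have "(\<Union>x\<in>?C. F x) \<subseteq> U"
    using z(3) V(3) by auto
  ultimately have "shoot F z \<ggreater> {U}"
    unfolding refines_def using z(2) by blast
  then show "\<exists>z\<in>scope F p. shoot F z \<ggreater> {U}"
    using z(1) unfolding scope_def by blast
qed

lemma antimono_if_eq_Union_children:
  assumes children: "\<And>s. F s = (\<Union>k. F (s @ [k]))" and "prefix s t"
  shows "F t \<subseteq> F s"
proof -
  obtain u where "t = s @ u"
    using assms(2) by (auto simp: prefix_def)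
  moreover have "F (s @ u) \<subseteq> F s"
  proof (induction u rule: rev_induct)
    case (snoc k u)
    have "F ((s @ u) @ [k]) \<subseteq> F (s @ u)"
      using children[of "s @ u"] by blast
    with snoc show ?case by simp
  qed simp
  ultimately show ?thesis by simp
qed

locale baire_tree =
  fixes X :: "'x topology" and F :: "nat list \<Rightarrow> 'x set"
  assumes openin_node: "openin X (F s)"
    and root_eq_topspace: "F [] = topspace X"
    and node_eq_Union_children: "F s = (\<Union>k. F (s @ [k]))"
    and children_disjoint: "k \<noteq> l \<Longrightarrow> F (s @ [k]) \<inter> F (s @ [l]) = {}"
    and branch_singleton: "\<exists>p. (\<Inter>n. F (map g [0..<n])) = {p}"
begin

lemma node_antimono: "prefix s t \<Longrightarrow> F t \<subseteq> F s"
  using node_eq_Union_children by (rule antimono_if_eq_Union_children)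

lemma node_of_length:
  assumes "p \<in> topspace X"
  shows "\<exists>v. length v = n \<and> p \<in> F v"
proof (induction n)
  case 0
  then show ?case
    using assms root_eq_topspace by simp
next
  case (Suc n)
  then obtain v where v: "length v = n" "p \<in> F v"
    by blast
  then obtain k where "p \<in> F (v @ [k])"
    using node_eq_Union_children[of v] by blast
  with v(1) show ?case
    by (intro exI[of _ "v @ [k]"]) simp
qed

lemma node_subset_topspace: "F s \<subseteq> topspace X"
  using node_antimono[of "[]" s] root_eq_topspace by simp

lemma grandchildren_disjoint:
  assumes "(k, l) \<noteq> (k', l')"
  shows "F (s @ [k, l]) \<inter> F (s @ [k', l']) = {}"
proof (cases "k = k'")
  case True
  then show ?thesis
    using assms children_disjoint[of l l' "s @ [k]"] by simp
next
  case False
  then have "F (s @ [k]) \<inter> F (s @ [k']) = {}"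
    by (rule children_disjoint)
  moreover have "F (s @ [k, l]) \<subseteq> F (s @ [k])" "F (s @ [k', l']) \<subseteq> F (s @ [k'])"
    by (simp_all add: node_antimono)
  ultimately show ?thesis by blast
qed

lemma in_some_grandchild:
  assumes "x \<in> F s"
  shows "\<exists>k l. x \<in> F (s @ [k, l])"
proof -
  obtain k where "x \<in> F (s @ [k])"
    using assms node_eq_Union_children[of s] by blast
  moreover obtain l where "x \<in> F ((s @ [k]) @ [l])" if "x \<in> F (s @ [k])"
    using node_eq_Union_children[of "s @ [k]"] by blast
  ultimately show ?thesis by auto
qed

lemma Inter_prefix_chain_singleton:
  fixes \<sigma> :: "nat \<Rightarrow> nat list"
  assumes mono: "\<And>n m. n \<le> m \<Longrightarrow> prefix (\<sigma> n) (\<sigma> m)"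
    and unbounded: "\<And>k. \<exists>m. k \<le> length (\<sigma> m)"
  shows "\<exists>p. (\<Inter>n. F (\<sigma> n)) = {p}"
proof -
  have "prefix x y \<or> prefix y x" if xy: "x \<in> range \<sigma>" "y \<in> range \<sigma>" for x y
  proof -
    obtain n m where "x = \<sigma> n" "y = \<sigma> m"
      using xy by blast
    then show ?thesis
      using nat_le_linear[of n m] mono by blast
  qed
  moreover have "\<exists>y\<in>range \<sigma>. k \<le> length y" for k
    using unbounded[of k] by blast
  ultimately obtain g where g: "\<And>n. \<sigma> n = map g [0..<length (\<sigma> n)]"
    using prefix_chain_initial_segments[of "range \<sigma>"] by blast
  have "(\<Inter>n. F (\<sigma> n)) = (\<Inter>k. F (map g [0..<k]))"
  proof (intro equalityI INT_greatest)
    fix k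
    obtain m where m: "k \<le> length (\<sigma> m)"
      using unbounded by blast
    have "take k (\<sigma> m) = map g [0..<k]"
      using m g[of m] by (metis take_map take_upt add_0)
    then have "prefix (map g [0..<k]) (\<sigma> m)"
      by (metis take_is_prefix)
    then show "(\<Inter>n. F (\<sigma> n)) \<subseteq> F (map g [0..<k])"
      using node_antimono by blast
  next
    fix n
    show "(\<Inter>k. F (map g [0..<k])) \<subseteq> F (\<sigma> n)"
      using g[of n] by (metis INT_lower UNIV_I)
  qed
  then show ?thesis
    using branch_singleton by simp
qed

lemma baire_foliage_tree: "baire_foliage_tree X F"
proof -
  have "locally_strict F"
    unfolding locally_strict_def sons_eq_range
  proof (intro allI conjI ballI impI)
    fix x
    show "F x = (\<Union>s\<in>range (\<lambda>n. x @ [n]). F s)"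
      using node_eq_Union_children[of x] by simp
    fix s t assume "s \<in> range (\<lambda>n. x @ [n])" "t \<in> range (\<lambda>n. x @ [n])" "s \<noteq> t"
    then show "F s \<inter> F t = {}"
      using children_disjoint by auto
  qed
  moreover have "strict_branches F"
    unfolding strict_branches_def
  proof (intro allI impI)
    fix B assume "is_branch B"
    then obtain g where "B = range (\<lambda>n. map g [0..<n])"
      using branch_eq_range_prefixes by blast
    then show "\<exists>p. (\<Inter>x\<in>B. F x) = {p}"
      using branch_singleton[of g] by simp
  qed
  ultimately show ?thesis
    unfolding baire_foliage_tree_def using openin_node root_eq_topspace by blast
qed

lemma has_pi_tree:
  assumes "\<And>p U. p \<in> topspace X \<Longrightarrow> openin X U \<Longrightarrow> p \<in> U \<Longrightarrow>
    \<exists>z N. p \<in> F z \<and> F (z @ [N]) \<noteq> {} \<and> (\<forall>j\<ge>N. F (z @ [j]) \<subseteq> U)"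
  shows "has_pi_tree X"
  unfolding has_pi_tree_def pi_tree_def using baire_foliage_tree grows_intoI[OF assms] by blast

end

(* Cofinitely many sons inside V are only required at even depths: the Sorgenfrey trees cut at
   a point of the complement at odd depths, and in the product every factor descends two levels
   at a time. *)
locale uniform_tree = baire_tree +
  assumes node_nonempty: "F s \<noteq> {}"
    and even_children_eventually_inside: "p \<in> topspace X \<Longrightarrow> openin X V \<Longrightarrow> p \<in> V \<Longrightarrow>
      \<exists>D. \<forall>s. D \<le> length s \<longrightarrow> even (length s) \<longrightarrow> p \<in> F s \<longrightarrow>
        (\<exists>N. \<forall>k\<ge>N. F (s @ [k]) \<subseteq> V)"

context uniform_tree
begin

lemma homeomorphic_image_children_eventually_inside:
  assumes hom: "homeomorphic_map X Y f" and p: "p \<in> topspace Y" and V: "openin Y V" "p \<in> V"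
  shows "\<exists>D. \<forall>s. D \<le> length s \<longrightarrow> even (length s) \<longrightarrow> p \<in> f ` F s \<longrightarrow>
    (\<exists>N. \<forall>k\<ge>N. f ` F (s @ [k]) \<subseteq> V)"
proof -
  have inj: "inj_on f (topspace X)"
    using hom homeomorphic_imp_injective_map by blast
  obtain q where q: "q \<in> topspace X" "p = f q"
    using p hom homeomorphic_imp_surjective_map by blast
  let ?V = "{x \<in> topspace X. f x \<in> V}"
  have "openin X ?V"
    using openin_continuous_map_preimage[OF homeomorphic_imp_continuous_map[OF hom] V(1)] .
  then obtain D where D: "\<forall>s. D \<le> length s \<longrightarrow> even (length s) \<longrightarrow> q \<in> F s \<longrightarrow>
      (\<exists>N. \<forall>k\<ge>N. F (s @ [k]) \<subseteq> ?V)"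
    using even_children_eventually_inside[OF q(1)] q V(2) by blast
  have "\<exists>N. \<forall>k\<ge>N. f ` F (s @ [k]) \<subseteq> V"
    if s: "D \<le> length s" "even (length s)" "p \<in> f ` F s" for s
  proof -
    obtain q' where "q' \<in> F s" "p = f q'"
      using s(3) by blast
    moreover have "q' \<in> topspace X"
      using \<open>q' \<in> F s\<close> node_subset_topspace by blast
    ultimately have "q \<in> F s"
      using q inj unfolding inj_on_def by auto
    then obtain N where "\<forall>k\<ge>N. F (s @ [k]) \<subseteq> ?V"
      using D s(1,2) by blast
    then show ?thesis
      by blast
  qed
  then show ?thesis
    by blast
qed

lemma homeomorphic_image:
  assumes hom: "homeomorphic_map X Y f"
  shows "uniform_tree Y (\<lambda>s. f ` F s)"
proof -
  have inj: "inj_on f (topspace X)" and onto: "f ` topspace X = topspace Y"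
    using hom homeomorphic_imp_injective_map homeomorphic_imp_surjective_map by blast+
  show ?thesis
  proof unfold_locales
    fix s
    show "openin Y (f ` F s)"
      using homeomorphic_map_openness[OF hom node_subset_topspace] openin_node by blast
    show "f ` F s \<noteq> {}"
      using node_nonempty by simp
    show "f ` F s = (\<Union>k. f ` F (s @ [k]))"
      using node_eq_Union_children[of s] by (metis image_UN)
  next
    show "f ` F [] = topspace Y"
      using onto root_eq_topspace by simp
  next
    fix k l :: nat and s assume "k \<noteq> l"
    then show "f ` F (s @ [k]) \<inter> f ` F (s @ [l]) = {}"
      using children_disjoint[of k l s]
        inj_on_image_Int[OF inj node_subset_topspace node_subset_topspace, of "s @ [k]" "s @ [l]"]
      by simp
  next
    fix g
    obtain p where "(\<Inter>n. F (map g [0..<n])) = {p}"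
      using branch_singleton by blast
    moreover have "f ` (\<Inter>n. F (map g [0..<n])) = (\<Inter>n. f ` F (map g [0..<n]))"
      using inj node_subset_topspace by (intro image_INT) auto
    ultimately have "(\<Inter>n. f ` F (map g [0..<n])) = {f p}"
      by simp
    then show "\<exists>p. (\<Inter>n. f ` F (map g [0..<n])) = {p}" ..
  qed (use homeomorphic_image_children_eventually_inside[OF hom] in blast)
qed

end

lemma uniform_tree_homeomorphic_space:
  assumes "uniform_tree X F" and "X homeomorphic_space Y"
  shows "\<exists>G. uniform_tree Y G"
  using assms uniform_tree.homeomorphic_image homeomorphic_space by blast

section \<open>The Baire space\<close>

definition cylinder :: "nat list \<Rightarrow> (nat \<Rightarrow> nat) set" where
  "cylinder s = {f. \<forall>i<length s. f i = s ! i}"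

lemma topspace_baire_space: "topspace baire_space = UNIV"
  unfolding baire_space_def by (simp add: topspace_product_topology PiE_UNIV_domain)

lemma cylinder_snoc: "f \<in> cylinder (s @ [k]) \<longleftrightarrow> f \<in> cylinder s \<and> f (length s) = k"
  unfolding cylinder_def by (auto simp: nth_append less_Suc_eq)

lemma openin_cylinder: "openin baire_space (cylinder s)"
proof -
  have "cylinder s = PiE UNIV (\<lambda>i. if i < length s then {s ! i} else UNIV)"
    unfolding cylinder_def PiE_UNIV_domain by (auto simp: Pi_def)
  moreover have "finite {i. (if i < length s then {s ! i} else UNIV) \<noteq> (UNIV :: nat set)}"
    by (rule finite_subset[of _ "{..<length s}"]) auto
  ultimately show ?thesis
    unfolding baire_space_def by (simp add: openin_PiE_gen)
qed

lemma Inter_cylinders: "(\<Inter>n. cylinder (map g [0..<n])) = {g}"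
proof (intro equalityI subsetI)
  fix f assume "f \<in> (\<Inter>n. cylinder (map g [0..<n]))"
  then have "f i = g i" for i
    using lessI[of i] unfolding cylinder_def by fastforce
  then show "f \<in> {g}"
    by auto
qed (auto simp: cylinder_def)

lemma cylinder_children_inside:
  assumes "openin baire_space V" "p \<in> V"
  shows "\<exists>D. \<forall>s k. D \<le> length s \<longrightarrow> p \<in> cylinder s \<longrightarrow> cylinder (s @ [k]) \<subseteq> V"
proof -
  obtain W where W: "finite {i. W i \<noteq> UNIV}" "p \<in> PiE UNIV W" "PiE UNIV W \<subseteq> V"
    using assms unfolding baire_space_def openin_product_topology_alt by auto
  then obtain D where D: "{i. W i \<noteq> UNIV} \<subseteq> {..<D}"
    by (auto simp: finite_nat_iff_bounded)
  have "cylinder (s @ [k]) \<subseteq> V" if "D \<le> length s" "p \<in> cylinder s" for s k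
  proof -
    have "f i \<in> W i" if "f \<in> cylinder (s @ [k])" for f i
    proof (cases "W i = UNIV")
      case False
      then have "f i = p i"
        using that \<open>p \<in> cylinder s\<close> \<open>D \<le> length s\<close> D cylinder_snoc[of f s k]
        unfolding cylinder_def by auto
      then show ?thesis
        using W(2) by auto
    qed simp
    then show ?thesis
      using W(3) by (auto simp: PiE_UNIV_domain)
  qed
  then show ?thesis
    by blast
qed

lemma uniform_tree_baire_space: "uniform_tree baire_space cylinder"
proof unfold_locales
  fix s
  show "openin baire_space (cylinder s)"
    by (rule openin_cylinder)
  have "(\<lambda>i. if i < length s then s ! i else 0) \<in> cylinder s"
    unfolding cylinder_def by simp
  then show "cylinder s \<noteq> {}"
    by blast
  show "cylinder s = (\<Union>k. cylinder (s @ [k]))"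
    by (auto simp: cylinder_snoc)
next
  show "cylinder [] = topspace baire_space"
    unfolding topspace_baire_space cylinder_def by simp
next
  fix s and k l :: nat
  assume "k \<noteq> l"
  then show "cylinder (s @ [k]) \<inter> cylinder (s @ [l]) = {}"
    by (auto simp: cylinder_snoc)
next
  fix g
  show "\<exists>p. (\<Inter>n. cylinder (map g [0..<n])) = {p}"
    by (rule exI[of _ g]) (rule Inter_cylinders)
next
  fix p V assume "openin baire_space V" "p \<in> V"
  then obtain D where "\<forall>s k. D \<le> length s \<longrightarrow> p \<in> cylinder s \<longrightarrow> cylinder (s @ [k]) \<subseteq> V"
    using cylinder_children_inside by blast
  then show "\<exists>D. \<forall>s. D \<le> length s \<longrightarrow> even (length s) \<longrightarrow> p \<in> cylinder s \<longrightarrow>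
      (\<exists>N. \<forall>k\<ge>N. cylinder (s @ [k]) \<subseteq> V)"
    by blast
qed

section \<open>Co-countable subspaces of the Sorgenfrey line\<close>

lemma cocountable_meets_interval:
  fixes S :: "real set"
  assumes "countable (- S)" and "x < y"
  shows "\<exists>z\<in>S. x < z \<and> z < y"
proof (rule ccontr)
  assume "\<not> ?thesis"
  then have "{x<..<y} \<subseteq> - S"
    by auto
  then have "countable {x<..<y}"
    using assms(1) countable_subset by blast
  with assms(2) show False
    using uncountable_open_interval by blast
qed

lemma ascending_intervals_cover:
  fixes c :: "nat \<Rightarrow> 'a::linorder"
  assumes "c 0 \<le> x" and "x < c k"
  shows "\<exists>j. c j \<le> x \<and> x < c (Suc j)"
  using assms(2)
proof (induction k)
  case (Suc k)
  then show ?case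
    by (cases "c k \<le> x") (auto simp: not_le)
qed (use assms(1) in simp)

lemma descending_intervals_cover:
  fixes e :: "nat \<Rightarrow> 'a::linorder"
  assumes "x < e 0" and "e k \<le> x"
  shows "\<exists>j. e (Suc j) \<le> x \<and> x < e j"
  using assms(2)
proof (induction k)
  case (Suc k)
  then show ?case
    by (cases "e k \<le> x") (auto simp: not_le)
qed (use assms(1) in simp)

lemma ascending_intervals_unique:
  fixes c :: "nat \<Rightarrow> 'a::linorder"
  assumes "strict_mono c" "c j \<le> x" "x < c (Suc j)" "c k \<le> x" "x < c (Suc k)"
  shows "j = k"
proof (rule ccontr)
  assume "j \<noteq> k"
  then have "c (Suc j) \<le> c k \<or> c (Suc k) \<le> c j"
    using assms(1) by (metis Suc_leI linorder_neqE_nat strict_mono_less_eq)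
  with assms(2-5) show False
    by auto
qed

lemma descending_intervals_unique:
  fixes e :: "nat \<Rightarrow> 'a::linorder"
  assumes "\<And>i j. i < j \<Longrightarrow> e j < e i" "e (Suc j) \<le> x" "x < e j" "e (Suc k) \<le> x" "x < e k"
  shows "j = k"
proof (rule ccontr)
  assume "j \<noteq> k"
  then have "e j \<le> e (Suc k) \<or> e k \<le> e (Suc j)"
    using assms(1) by (metis Suc_lessI linorder_neqE_nat order.strict_implies_order order_refl)
  with assms(2-5) show False
    by auto
qed

lemma topspace_sorgenfrey: "topspace sorgenfrey = UNIV"
proof -
  have "x \<in> {x..<x + 1}" for x :: real
    by simp
  then show ?thesis
    unfolding sorgenfrey_def topology_generated_by_topspace by blast
qed

lemma openin_sorgenfrey_Ico: "openin sorgenfrey {a..<b}"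
  unfolding sorgenfrey_def by (rule topology_generated_by_Basis) blast

lemma openin_sorgenfrey_contains_Ico:
  assumes "openin sorgenfrey U" and "x \<in> U"
  shows "\<exists>e>0. {x..<x + e} \<subseteq> U"
proof -
  have "generate_topology_on {{a..<b} |a b. True} U"
    using assms(1) unfolding sorgenfrey_def by (rule openin_topology_generated_by)
  then have "\<forall>x\<in>U. \<exists>e>0. {x..<x + e} \<subseteq> U"
  proof (induction rule: generate_topology_on.induct)
    case (Int U V)
    show ?case
    proof
      fix x assume "x \<in> U \<inter> V"
      then obtain e e' where "e > 0" "{x..<x + e} \<subseteq> U" "e' > 0" "{x..<x + e'} \<subseteq> V"
        using Int.IH by blast
      moreover have "{x..<x + min e e'} = {x..<x + e} \<inter> {x..<x + e'}"
        by (auto simp: min_def)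
      ultimately have "min e e' > 0" "{x..<x + min e e'} \<subseteq> U \<inter> V"
        by auto
      then show "\<exists>e>0. {x..<x + e} \<subseteq> U \<inter> V"
        by blast
    qed
  next
    case (UN K)
    then show ?case
      by (meson UnionE UnionI subsetD subsetI)
  next
    case (Basis s)
    then obtain a b where s: "s = {a..<b}"
      by blast
    show ?case
    proof
      fix x assume "x \<in> s"
      then have "0 < b - x" "{x..<x + (b - x)} \<subseteq> s"
        using s by auto
      then show "\<exists>e>0. {x..<x + e} \<subseteq> s"
        by blast
    qed
  qed simp
  with assms(2) show ?thesis
    by blast
qed

lemma nested_intervals_unique_point:
  fixes A B :: "nat \<Rightarrow> real"
  assumes "\<And>n. A n \<le> A (Suc n)" "\<And>n. B (Suc n) \<le> B n" "\<And>n. A n \<le> B n"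
    and "(\<lambda>n. B n - A n) \<longlonglongrightarrow> 0"
  obtains L where "\<And>n. A n \<le> L" "\<And>n. L \<le> B n"
    and "\<And>x. (\<And>n. A n \<le> x \<and> x \<le> B n) \<Longrightarrow> x = L"
proof -
  have "(\<lambda>n. A n - B n) \<longlonglongrightarrow> 0"
    using tendsto_minus[OF assms(4)] by simp
  then obtain L where L: "\<forall>n. A n \<le> L" "A \<longlonglongrightarrow> L" "\<forall>n. L \<le> B n" "B \<longlonglongrightarrow> L"
    using nested_sequence_unique[of A B] assms(1-3) by blast
  have "x = L" if x: "\<And>n. A n \<le> x \<and> x \<le> B n" for x
  proof (rule antisym)
    show "x \<le> L"
      using x by (intro LIMSEQ_le_const[OF L(4)]) auto
    show "L \<le> x"
      using x by (intro LIMSEQ_le_const2[OF L(2)]) auto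
  qed
  with L(1,3) show ?thesis
    using that by blast
qed

locale cocountable_reals =
  fixes S :: "real set"
  assumes countable_complement: "countable (- S)"
begin

definition between :: "real \<Rightarrow> real \<Rightarrow> real" where
  "between x y = (SOME z. z \<in> S \<and> x < z \<and> z < y)"

lemma between:
  assumes "x < y"
  shows "between x y \<in> S" "x < between x y" "between x y < y"
  using someI_ex[of "\<lambda>z. z \<in> S \<and> x < z \<and> z < y"]
    cocountable_meets_interval[OF countable_complement assms]
  unfolding between_def by auto

definition ascend :: "real \<Rightarrow> real \<Rightarrow> nat \<Rightarrow> real" where
  "ascend a q k = (if k = 0 then a else between (q - (q - a) / 2 ^ k) (q - (q - a) / 2 ^ Suc k))"

lemma ascend_0 [simp]: "ascend a q 0 = a"
  by (simp add: ascend_def)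

context
  fixes a q :: real
  assumes less: "a < q"
begin

lemma ascend_dyadic_bounds:
  assumes "k \<noteq> 0"
  shows "ascend a q k \<in> S" "q - (q - a) / 2 ^ k < ascend a q k" "ascend a q k < q - (q - a) / 2 ^ Suc k"
proof -
  have "(q - a) / 2 ^ Suc k < (q - a) / 2 ^ k"
    using less by (simp add: divide_strict_left_mono)
  then show "ascend a q k \<in> S" "q - (q - a) / 2 ^ k < ascend a q k" "ascend a q k < q - (q - a) / 2 ^ Suc k"
    unfolding ascend_def using assms between[of "q - (q - a) / 2 ^ k"] by simp_all
qed

lemma ascend_in_S: "a \<in> S \<Longrightarrow> ascend a q k \<in> S"
  using ascend_dyadic_bounds(1) by (cases "k = 0") auto

lemma ascend_less: "ascend a q k < q"
proof (cases "k = 0")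
  case False
  have "0 < (q - a) / 2 ^ Suc k"
    using less by simp
  with ascend_dyadic_bounds(3)[OF False] show ?thesis
    by linarith
qed (simp add: ascend_def less)

lemma ascend_Suc_less: "ascend a q k < ascend a q (Suc k)"
proof (cases "k = 0")
  case True
  have "a \<le> q - (q - a) / 2"
    using less by (simp add: field_simps)
  with True ascend_dyadic_bounds(2)[of 1] show ?thesis
    by (simp add: ascend_def)
next
  case False
  then show ?thesis
    using ascend_dyadic_bounds(3)[OF False] ascend_dyadic_bounds(2)[of "Suc k"] by simp
qed

lemma strict_mono_ascend: "strict_mono (ascend a q)"
  by (rule strict_monoI_Suc) (rule ascend_Suc_less)

lemma ascend_ge: "a \<le> ascend a q k"
  using strict_mono_less_eq[OF strict_mono_ascend, of 0 k] by (simp add: ascend_def)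

lemma ascend_step: "ascend a q (Suc k) - ascend a q k \<le> 3 / 4 * (q - a)"
proof (cases "k = 0")
  case True
  then show ?thesis
    using ascend_dyadic_bounds(3)[of 1] by (simp add: ascend_def field_simps)
next
  case False
  define t where "t = (q - a) / 2 ^ k"
  have "ascend a q (Suc k) < q - t / 4"
    using ascend_dyadic_bounds(3)[of "Suc k"] by (simp add: t_def field_simps)
  moreover have "q - t < ascend a q k"
    using ascend_dyadic_bounds(2)[OF False] by (simp add: t_def)
  moreover have "t \<le> (q - a) / 2"
    unfolding t_def using False less self_le_power[of "2::real" k] by (intro divide_left_mono) auto
  ultimately show ?thesis
    using less by (simp add: field_simps)
qed

lemma ascend_exceeds:
  assumes "x < q"
  shows "\<exists>k. x < ascend a q k"
proof -
  obtain n where "(1 / 2) ^ n < (q - x) / (q - a)"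
    using real_arch_pow_inv[of "(q - x) / (q - a)" "1 / 2"] assms less by auto
  then have "(q - a) / 2 ^ n < q - x"
    using less by (simp add: field_simps power_one_over)
  moreover have "(q - a) / 2 ^ Suc n < (q - a) / 2 ^ n"
    using less by (simp add: divide_strict_left_mono)
  ultimately have "x < q - (q - a) / 2 ^ Suc n"
    by linarith
  also have "\<dots> < ascend a q (Suc n)"
    using ascend_dyadic_bounds(2)[of "Suc n"] by simp
  finally show ?thesis ..
qed

end

lemma cocountable_reals_reflection: "cocountable_reals (uminus ` S)"
  by unfold_locales (metis bij_image_Compl_eq bij_uminus countable_complement countable_image)

definition descend :: "real \<Rightarrow> real \<Rightarrow> nat \<Rightarrow> real" where
  "descend b d k = - cocountable_reals.ascend (uminus ` S) (- b) (- d) k"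

lemma descend_0 [simp]: "descend b d 0 = b"
  using cocountable_reals.ascend_0[OF cocountable_reals_reflection] by (simp add: descend_def)

context
  fixes b d :: real
  assumes less: "d < b"
begin

interpretation reflected: cocountable_reals "uminus ` S"
  by (rule cocountable_reals_reflection)

lemma descend_in_S: "k \<noteq> 0 \<Longrightarrow> descend b d k \<in> S"
  using reflected.ascend_dyadic_bounds(1)[of "- b" "- d" k] less
  unfolding descend_def by (auto simp: image_iff)

lemma descend_greater: "d < descend b d k"
  using reflected.ascend_less[of "- b" "- d" k] less unfolding descend_def by simp

lemma descend_le: "descend b d k \<le> b"
  using reflected.ascend_ge[of "- b" "- d" k] less unfolding descend_def by simp

lemma descend_strict_antimono: "i < j \<Longrightarrow> descend b d j < descend b d i"
  using reflected.strict_mono_ascend[of "- b" "- d"] less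
  unfolding descend_def by (simp add: strict_mono_less)

lemma descend_step: "descend b d k - descend b d (Suc k) \<le> 3 / 4 * (b - d)"
  using reflected.ascend_step[of "- b" "- d" k] less unfolding descend_def by simp

lemma descend_below:
  assumes "d < x"
  shows "\<exists>k. descend b d k < x"
proof -
  obtain k where "- x < reflected.ascend (- b) (- d) k"
    using reflected.ascend_exceeds[of "- b" "- d" "- x"] less assms by auto
  then have "descend b d k < x"
    unfolding descend_def by linarith
  then show ?thesis ..
qed

end

definition mark :: "int \<Rightarrow> real" where
  "mark i = between (of_int i) (of_int i + 1 / 2)"

lemma mark: "mark i \<in> S" "of_int i < mark i" "mark i < of_int i + 1 / 2"
  unfolding mark_def using between[of "of_int i" "of_int i + 1 / 2"] by simp_all

lemma mark_less:
  assumes "i < j"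
  shows "mark i < mark j"
proof -
  have "of_int i + 1 \<le> (of_int j :: real)"
    using assms by (metis of_int_add of_int_le_iff of_int_1 zless_imp_add1_zle)
  then show ?thesis
    using mark(3)[of i] mark(2)[of j] by linarith
qed

lemma mark_intervals_cover: "\<exists>i. mark i \<le> x \<and> x < mark (i + 1)"
proof -
  define i where "i = \<lfloor>x\<rfloor>"
  have "mark (i - 1) \<le> x" "x < mark (i + 1)"
    using mark(3)[of "i - 1"] mark(2)[of "i + 1"] unfolding i_def by linarith+
  then show ?thesis
    by (cases "mark i \<le> x") (auto simp: not_le intro: exI[of _ "i - 1"])
qed

lemma mark_intervals_unique:
  assumes "mark i \<le> x" "x < mark (i + 1)" "mark j \<le> x" "x < mark (j + 1)"
  shows "i = j"
proof (rule ccontr)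
  assume "i \<noteq> j"
  then have "mark (i + 1) \<le> mark j \<or> mark (j + 1) \<le> mark i"
    using mark_less by (metis linorder_neqE order.order_iff_strict zless_imp_add1_zle)
  with assms show False
    by auto
qed

definition gap :: "nat \<Rightarrow> real" where
  "gap n = from_nat_into (- S) n"

definition cuts :: "real \<Rightarrow> real \<Rightarrow> nat \<Rightarrow> bool" where
  "cuts a b m \<longleftrightarrow> odd m \<and> a < gap (m div 2) \<and> gap (m div 2) < b \<and> gap (m div 2) \<notin> S"

(* At depth m = 2n + 1 an
   interval containing the n-th point d of the complement of S is split into intervals
   accumulating at d from below (even k) and from above (odd k); every other interval is split
   into intervals accumulating at its right endpoint. *)
fun child :: "real \<times> real \<Rightarrow> nat \<Rightarrow> nat \<Rightarrow> real \<times> real" where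
  "child (a, b) m k =
    (if m = 0 then (mark (int_decode k), mark (int_decode k + 1))
     else if cuts a b m then
       (if even k then (ascend a (gap (m div 2)) (k div 2), ascend a (gap (m div 2)) (Suc (k div 2)))
        else (descend b (gap (m div 2)) (Suc (k div 2)), descend b (gap (m div 2)) (k div 2)))
     else (ascend a b k, ascend a b (Suc k)))"

definition halfopen :: "real \<times> real \<Rightarrow> real set" where
  "halfopen h = {fst h..<snd h}"

lemma root_child_cover: "\<exists>k. x \<in> halfopen (child h 0 k)"
proof -
  obtain i where "mark i \<le> x" "x < mark (i + 1)"
    using mark_intervals_cover by blast
  then have "x \<in> halfopen (child h 0 (int_encode i))"
    by (cases h) (simp add: halfopen_def)
  then show ?thesis ..
qed

lemma root_child_unique: "x \<in> halfopen (child h 0 k) \<Longrightarrow> x \<in> halfopen (child h 0 l) \<Longrightarrow> k = l"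
  using mark_intervals_unique[of "int_decode k" x "int_decode l"] inj_int_decode
  by (cases h) (auto simp: halfopen_def inj_eq)

lemma root_child_bounds:
  "fst (child h 0 k) \<in> S" "fst (child h 0 k) < snd (child h 0 k)"
  "snd (child h 0 k) - fst (child h 0 k) \<le> 2"
  using mark[of "int_decode k"] mark[of "int_decode k + 1"] mark_less[of "int_decode k" "int_decode k + 1"]
  by (cases h; simp)+

context
  fixes a b :: real and m :: nat
  assumes less: "a < b" and nonroot: "m \<noteq> 0"
begin

lemma cut_child_bounds:
  assumes "a \<in> S" and cut: "cuts a b m"
  shows "fst (child (a, b) m k) \<in> S \<and> fst (child (a, b) m k) < snd (child (a, b) m k) \<and>
    a \<le> fst (child (a, b) m k) \<and> snd (child (a, b) m k) \<le> b \<and>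
    snd (child (a, b) m k) - fst (child (a, b) m k) \<le> 3 / 4 * (b - a)"
proof -
  let ?d = "gap (m div 2)" and ?c = "child (a, b) m k"
  have d: "a < ?d" "?d < b"
    using cut unfolding cuts_def by auto
  show ?thesis
  proof (cases "even k")
    case True
    have "3 / 4 * (?d - a) \<le> 3 / 4 * (b - a)"
      using d by simp
    moreover have "?c = (ascend a ?d (k div 2), ascend a ?d (Suc (k div 2)))"
      using True cut nonroot by simp
    ultimately show ?thesis
      using d ascend_in_S[OF d(1) assms(1)] ascend_Suc_less[OF d(1)] ascend_ge[OF d(1)]
        ascend_less[OF d(1), of "Suc (k div 2)"] ascend_step[OF d(1), of "k div 2"]
      by auto
  next
    case False
    have "3 / 4 * (b - ?d) \<le> 3 / 4 * (b - a)"
      using d by simp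
    moreover have "?c = (descend b ?d (Suc (k div 2)), descend b ?d (k div 2))"
      using False cut nonroot by simp
    ultimately show ?thesis
      using d descend_in_S[OF d(2), of "Suc (k div 2)"]
        descend_strict_antimono[OF d(2), of "k div 2" "Suc (k div 2)"]
        descend_greater[OF d(2), of "Suc (k div 2)"] descend_le[OF d(2), of "k div 2"]
        descend_step[OF d(2), of "k div 2"]
      by auto
  qed
qed

lemma child_bounds:
  assumes "a \<in> S"
  shows "fst (child (a, b) m k) \<in> S" "fst (child (a, b) m k) < snd (child (a, b) m k)"
    "a \<le> fst (child (a, b) m k)" "snd (child (a, b) m k) \<le> b"
    "snd (child (a, b) m k) - fst (child (a, b) m k) \<le> 3 / 4 * (b - a)"
    "even m \<Longrightarrow> snd (child (a, b) m k) < b"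
proof -
  let ?c = "child (a, b) m k"
  have "fst ?c \<in> S \<and> fst ?c < snd ?c \<and> a \<le> fst ?c \<and> snd ?c \<le> b \<and>
      snd ?c - fst ?c \<le> 3 / 4 * (b - a) \<and> (even m \<longrightarrow> snd ?c < b)"
  proof (cases "cuts a b m")
    case True
    then show ?thesis
      using cut_child_bounds[OF assms True] by (auto simp: cuts_def)
  next
    case False
    then show ?thesis
      using nonroot ascend_in_S[OF less assms] ascend_Suc_less[OF less] ascend_ge[OF less]
        ascend_less[OF less, of "Suc k"] ascend_step[OF less, of k]
      by simp
  qed
  then show "fst ?c \<in> S" "fst ?c < snd ?c" "a \<le> fst ?c" "snd ?c \<le> b"
    "snd ?c - fst ?c \<le> 3 / 4 * (b - a)" "even m \<Longrightarrow> snd ?c < b"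
    by auto
qed

lemma child_cover:
  assumes "x \<in> S" "a \<le> x" "x < b"
  shows "\<exists>k. x \<in> halfopen (child (a, b) m k)"
proof (cases "cuts a b m")
  case cut: True
  let ?d = "gap (m div 2)"
  have d: "a < ?d" "?d < b" "x \<noteq> ?d"
    using cut assms(1) unfolding cuts_def by auto
  show ?thesis
  proof (cases "x < ?d")
    case True
    obtain j where "x < ascend a ?d j"
      using ascend_exceeds[OF d(1) True] by blast
    then obtain k where "ascend a ?d k \<le> x" "x < ascend a ?d (Suc k)"
      using ascending_intervals_cover[of "ascend a ?d"] assms(2) by auto
    then have "x \<in> halfopen (child (a, b) m (2 * k))"
      using cut nonroot by (simp add: halfopen_def)
    then show ?thesis ..
  next
    case False
    then have "?d < x"
      using d(3) by simp
    then obtain j where "descend b ?d j < x"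
      using descend_below[OF d(2)] by blast
    then have "descend b ?d j \<le> x"
      by simp
    then obtain k where "descend b ?d (Suc k) \<le> x" "x < descend b ?d k"
      using descending_intervals_cover[of x "descend b ?d" j] assms(3) by auto
    then have "x \<in> halfopen (child (a, b) m (2 * k + 1))"
      using cut nonroot by (simp add: halfopen_def)
    then show ?thesis ..
  qed
next
  case False
  obtain j where "x < ascend a b j"
    using ascend_exceeds[OF less assms(3)] by blast
  then obtain k where "ascend a b k \<le> x" "x < ascend a b (Suc k)"
    using ascending_intervals_cover[of "ascend a b"] assms(2) by auto
  then have "x \<in> halfopen (child (a, b) m k)"
    using False nonroot by (simp add: halfopen_def)
  then show ?thesis ..
qed

lemma child_avoids_gap:
  assumes "cuts a b m"
  shows "gap (m div 2) \<notin> halfopen (child (a, b) m k)"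
proof -
  have "a < gap (m div 2)" "gap (m div 2) < b"
    using assms unfolding cuts_def by auto
  then show ?thesis
    using assms nonroot ascend_less[of a "gap (m div 2)" "Suc (k div 2)"]
      descend_greater[of "gap (m div 2)" b "Suc (k div 2)"]
    by (auto simp: halfopen_def)
qed

lemma child_unique:
  assumes "x \<in> halfopen (child (a, b) m k)" "x \<in> halfopen (child (a, b) m l)"
  shows "k = l"
proof (cases "cuts a b m")
  case cut: True
  let ?d = "gap (m div 2)"
  have d: "a < ?d" "?d < b"
    using cut unfolding cuts_def by auto
  have side: "x < ?d \<longleftrightarrow> even i" if "x \<in> halfopen (child (a, b) m i)" for i
    using that cut nonroot ascend_less[OF d(1), of "Suc (i div 2)"]
      descend_greater[OF d(2), of "Suc (i div 2)"]
    by (cases "even i") (auto simp: halfopen_def)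
  then have "even k \<longleftrightarrow> even l"
    using assms by blast
  moreover have "k div 2 = l div 2"
  proof (cases "even k")
    case True
    then show ?thesis
      using assms \<open>even k \<longleftrightarrow> even l\<close> cut nonroot
        ascending_intervals_unique[OF strict_mono_ascend[OF d(1)], of "k div 2" x "l div 2"]
      by (simp add: halfopen_def)
  next
    case False
    then show ?thesis
      using assms \<open>even k \<longleftrightarrow> even l\<close> cut nonroot
        descending_intervals_unique[of "descend b ?d" "k div 2" x "l div 2"] descend_strict_antimono[OF d(2)]
      by (simp add: halfopen_def)
  qed
  ultimately show ?thesis
    by (metis even_two_times_div_two odd_two_times_div_two_succ)
next
  case False
  then show ?thesis
    using assms nonroot ascending_intervals_unique[OF strict_mono_ascend[OF less], of k x l]
    by (simp add: halfopen_def)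
qed

end

(* The interval (0, 0) at the root is a dummy: the root node is S itself and its sons do not
   depend on it. *)
fun rev_interval :: "nat list \<Rightarrow> real \<times> real" where
  "rev_interval [] = (0, 0)"
| "rev_interval (k # ks) = child (rev_interval ks) (length ks) k"

definition interval :: "nat list \<Rightarrow> real \<times> real" where
  "interval s = rev_interval (rev s)"

lemma interval_snoc [simp]: "interval (s @ [k]) = child (interval s) (length s) k"
  by (simp add: interval_def)

lemma interval_single [simp]: "interval [k] = child (0, 0) 0 k"
  by (simp add: interval_def)

lemma interval_invariant:
  assumes "s \<noteq> []"
  shows "fst (interval s) \<in> S \<and> fst (interval s) < snd (interval s) \<and>
    snd (interval s) - fst (interval s) \<le> 2 * (3 / 4) ^ (length s - 1)"
  using assms
proof (induction s rule: rev_induct)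
  case (snoc k s)
  show ?case
  proof (cases "s = []")
    case True
    then show ?thesis
      using root_child_bounds[of "(0, 0)" k] by simp
  next
    case False
    obtain a b where ab: "interval s = (a, b)"
      by fastforce
    with snoc.IH[OF False] have IH: "a \<in> S" "a < b" "b - a \<le> 2 * (3 / 4) ^ (length s - 1)"
      by auto
    have "length s \<noteq> 0"
      using False by simp
    note bounds = child_bounds[OF IH(2) this IH(1), of k]
    have "3 / 4 * (b - a) \<le> 2 * (3 / 4) ^ length s"
      using IH(3) \<open>length s \<noteq> 0\<close> by (cases "length s") auto
    with bounds(5) have "snd (child (a, b) (length s) k) - fst (child (a, b) (length s) k)
        \<le> 2 * (3 / 4) ^ length s"
      by linarith
    with bounds(1,2) ab show ?thesis
      by simp
  qed
qed simp

context
  fixes s :: "nat list"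
  assumes nonempty: "s \<noteq> []"
begin

lemma interval_snoc_nested:
  "fst (interval s) \<le> fst (interval (s @ [k]))" "snd (interval (s @ [k])) \<le> snd (interval s)"
  "even (length s) \<Longrightarrow> snd (interval (s @ [k])) < snd (interval s)"
  using child_bounds[of "fst (interval s)" "snd (interval s)" "length s" k] interval_invariant[OF nonempty]
    nonempty by simp_all

lemma interval_snoc_avoids_gap:
  "cuts (fst (interval s)) (snd (interval s)) (length s) \<Longrightarrow>
    gap (length s div 2) \<notin> halfopen (interval (s @ [k]))"
  using child_avoids_gap[of "fst (interval s)" "snd (interval s)" "length s" k]
    interval_invariant[OF nonempty] nonempty by simp

end

definition node :: "nat list \<Rightarrow> real set" where
  "node s = (if s = [] then S else S \<inter> halfopen (interval s))"

lemma node_snoc: "node (s @ [k]) = S \<inter> halfopen (child (interval s) (length s) k)"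
  by (simp add: node_def)

lemma openin_node: "openin (subtopology sorgenfrey S) (node s)"
proof (cases "s = []")
  case False
  then have "node s = S \<inter> {fst (interval s)..<snd (interval s)}"
    by (simp add: node_def halfopen_def)
  then show ?thesis
    using openin_sorgenfrey_Ico by (auto simp: openin_subtopology)
qed (use openin_topspace[of "subtopology sorgenfrey S"] in \<open>simp add: node_def topspace_sorgenfrey\<close>)

lemma node_nonempty: "node s \<noteq> {}"
proof (cases "s = []")
  case True
  have "S \<noteq> {}"
    using countable_complement uncountable_UNIV_real by auto
  with True show ?thesis
    by (simp add: node_def)
next
  case False
  then have "fst (interval s) \<in> node s"
    using interval_invariant[OF False] by (simp add: node_def halfopen_def)
  then show ?thesis
    by blast
qed

lemma node_eq_Union_children: "node s = (\<Union>k. node (s @ [k]))"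
proof (cases "s = []")
  case True
  then show ?thesis
    using root_child_cover[of _ "(0, 0)"] by (auto simp: node_def)
next
  case False
  obtain a b where ab: "interval s = (a, b)"
    by fastforce
  with interval_invariant[OF False] have a: "a \<in> S" "a < b"
    by auto
  have m: "length s \<noteq> 0"
    using False by simp
  show ?thesis
  proof (intro equalityI subsetI)
    fix x assume "x \<in> node s"
    then have "x \<in> S" "a \<le> x" "x < b"
      using False ab by (auto simp: node_def halfopen_def)
    then obtain k where "x \<in> halfopen (child (a, b) (length s) k)"
      using child_cover[OF a(2) m] by blast
    with \<open>x \<in> S\<close> ab show "x \<in> (\<Union>k. node (s @ [k]))"
      by (auto simp: node_snoc)
  next
    fix x assume "x \<in> (\<Union>k. node (s @ [k]))"
    then obtain k where "x \<in> S" "x \<in> halfopen (child (a, b) (length s) k)"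
      using ab by (auto simp: node_snoc)
    with child_bounds(3,4)[OF a(2) m a(1), of k] False ab show "x \<in> node s"
      by (auto simp: node_def halfopen_def)
  qed
qed

lemma children_disjoint:
  assumes "k \<noteq> l"
  shows "node (s @ [k]) \<inter> node (s @ [l]) = {}"
proof (cases "s = []")
  case True
  with assms show ?thesis
    using root_child_unique[of _ "(0, 0)" k l] by (auto simp: node_def)
next
  case False
  obtain a b where ab: "interval s = (a, b)"
    by fastforce
  with interval_invariant[OF False] have "a < b"
    by auto
  moreover have "length s \<noteq> 0"
    using False by simp
  ultimately show ?thesis
    using assms ab child_unique[of a b "length s" _ k l] by (auto simp: node_snoc)
qed

lemma branch_interval_limit:
  "\<exists>L. (\<forall>n. fst (interval (map g [0..<Suc n])) \<le> L \<and> L < snd (interval (map g [0..<Suc n]))) \<and>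
    (\<forall>x. (\<forall>n. x \<in> halfopen (interval (map g [0..<Suc n]))) \<longrightarrow> x = L)"
proof -
  define A where "A n = fst (interval (map g [0..<Suc n]))" for n
  define B where "B n = snd (interval (map g [0..<Suc n]))" for n
  have snoc: "map g [0..<Suc (Suc n)] = map g [0..<Suc n] @ [g (Suc n)]" for n
    by simp
  have shrink: "A n < B n" "B n - A n \<le> 2 * (3 / 4) ^ n" for n
    using interval_invariant[of "map g [0..<Suc n]"] unfolding A_def B_def by auto
  have nested: "A n \<le> A (Suc n)" "B (Suc n) \<le> B n" "even (Suc n) \<Longrightarrow> B (Suc n) < B n" for n
    using interval_snoc_nested[of "map g [0..<Suc n]" "g (Suc n)"] unfolding A_def B_def snoc by auto
  have "(\<lambda>n. B n - A n) \<longlonglongrightarrow> 0"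
  proof (rule Lim_null_comparison)
    show "\<forall>\<^sub>F n in sequentially. norm (B n - A n) \<le> 2 * (3 / 4) ^ n"
      using shrink by (intro always_eventually allI) (simp add: less_imp_le)
    show "(\<lambda>n. 2 * (3 / 4 :: real) ^ n) \<longlonglongrightarrow> 0"
      by (intro tendsto_mult_right_zero LIMSEQ_realpow_zero) simp_all
  qed
  then obtain L where L: "\<And>n. A n \<le> L" "\<And>n. L \<le> B n"
    and unique: "\<And>x. (\<And>n. A n \<le> x \<and> x \<le> B n) \<Longrightarrow> x = L"
    using nested_intervals_unique_point[of A B] nested(1,2) shrink(1) less_imp_le by metis
  have "L < B n" for n
  proof (cases "even (Suc n)")
    case True
    then show ?thesis
      using nested(3)[of n] L(2)[of "Suc n"] by simp
  next
    case False
    then show ?thesis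
      using nested(3)[of "Suc n"] nested(2)[of n] L(2)[of "Suc (Suc n)"] by simp
  qed
  moreover have "x = L" if "\<And>n. x \<in> halfopen (interval (map g [0..<Suc n]))" for x
    using that by (intro unique) (auto simp: A_def B_def halfopen_def less_imp_le)
  ultimately show ?thesis
    using L(1) unfolding A_def B_def by blast
qed

(* This is what the cuts are for: the n-th point of the complement of S is excluded from every
   node of depth 2n + 2. *)
lemma branch_limit_in_S:
  assumes "\<And>n. fst (interval (map g [0..<Suc n])) \<le> L" "\<And>n. L < snd (interval (map g [0..<Suc n]))"
  shows "L \<in> S"
proof (rule ccontr)
  assume "L \<notin> S"
  then have "- S \<noteq> {}"
    by blast
  then have "L \<in> range gap"
    unfolding gap_def using countable_complement \<open>L \<notin> S\<close> by simp
  then obtain m where m: "gap m = L"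
    by blast
  let ?s = "map g [0..<Suc (2 * m)]"
  have "fst (interval ?s) \<in> S"
    using interval_invariant[of ?s] by simp
  with \<open>L \<notin> S\<close> have "fst (interval ?s) < L"
    using assms(1)[of "2 * m"] by (metis order_le_neq_trans)
  then have "cuts (fst (interval ?s)) (snd (interval ?s)) (length ?s)"
    using assms(2)[of "2 * m"] \<open>L \<notin> S\<close> m unfolding cuts_def by simp
  then have "L \<notin> halfopen (interval (?s @ [g (Suc (2 * m))]))"
    using interval_snoc_avoids_gap[of ?s] m by simp
  moreover have "?s @ [g (Suc (2 * m))] = map g [0..<Suc (Suc (2 * m))]"
    by simp
  ultimately show False
    using assms[of "Suc (2 * m)"] by (simp add: halfopen_def)
qed

lemma branch_singleton: "\<exists>p. (\<Inter>n. node (map g [0..<n])) = {p}"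
proof -
  obtain L where L: "\<And>n. fst (interval (map g [0..<Suc n])) \<le> L"
      "\<And>n. L < snd (interval (map g [0..<Suc n]))"
    and unique: "\<And>x. \<forall>n. x \<in> halfopen (interval (map g [0..<Suc n])) \<Longrightarrow> x = L"
    using branch_interval_limit[of g] by blast
  have node_Suc: "node (map g [0..<Suc n]) = S \<inter> halfopen (interval (map g [0..<Suc n]))" for n
    by (simp add: node_def)
  have "(\<Inter>n. node (map g [0..<n])) = (\<Inter>n. node (map g [0..<Suc n]))"
  proof (intro equalityI INT_greatest)
    fix n
    show "(\<Inter>n. node (map g [0..<n])) \<subseteq> node (map g [0..<Suc n])"
      by (rule INT_lower) simp
    have "node (map g [0..<Suc n]) \<subseteq> node (map g [0..<n])"
      using node_eq_Union_children[of "map g [0..<n]"] by auto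
    then show "(\<Inter>n. node (map g [0..<Suc n])) \<subseteq> node (map g [0..<n])"
      by blast
  qed
  also have "\<dots> = {L}"
    using L branch_limit_in_S[OF L] unique unfolding node_Suc by (auto simp: halfopen_def)
  finally show ?thesis ..
qed

lemma even_node_children_eventually_above:
  assumes "s \<noteq> []" "even (length s)" "p \<in> node s"
  shows "\<exists>N. \<forall>k\<ge>N. node (s @ [k]) \<subseteq> S \<inter> {p..<snd (interval s)}"
proof -
  obtain a b where ab: "interval s = (a, b)"
    by fastforce
  with interval_invariant[OF assms(1)] have "a < b"
    by auto
  have p: "a \<le> p" "p < b"
    using assms(1,3) ab by (auto simp: node_def halfopen_def)
  obtain N where N: "p < ascend a b N"
    using ascend_exceeds[OF \<open>a < b\<close> p(2)] by blast
  have "\<not> cuts a b (length s)" "length s \<noteq> 0"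
    using assms(1,2) unfolding cuts_def by auto
  then have "node (s @ [k]) = S \<inter> {ascend a b k..<ascend a b (Suc k)}" for k
    using ab by (simp add: node_snoc halfopen_def)
  moreover have "p < ascend a b k" "ascend a b (Suc k) < b" if "N \<le> k" for k
    using N strict_mono_less_eq[OF strict_mono_ascend[OF \<open>a < b\<close>], of N k] that
      ascend_less[OF \<open>a < b\<close>, of "Suc k"] by auto
  ultimately have "node (s @ [k]) \<subseteq> S \<inter> {p..<snd (interval s)}" if "N \<le> k" for k
    using ab that by fastforce
  then show ?thesis
    by blast
qed

lemma node_children_eventually_inside:
  assumes "openin (subtopology sorgenfrey S) V" and "p \<in> V"
  shows "\<exists>D. \<forall>s. D \<le> length s \<longrightarrow> even (length s) \<longrightarrow> p \<in> node s \<longrightarrow>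
    (\<exists>N. \<forall>k\<ge>N. node (s @ [k]) \<subseteq> V)"
proof -
  obtain U where U: "openin sorgenfrey U" "V = U \<inter> S"
    using assms(1) unfolding openin_subtopology by blast
  obtain e where e: "e > 0" "{p..<p + e} \<subseteq> U"
    using openin_sorgenfrey_contains_Ico[OF U(1)] assms(2) U(2) by blast
  obtain D where D: "(3 / 4 :: real) ^ D < e / 2"
    using real_arch_pow_inv[of "e / 2" "3 / 4"] e(1) by auto
  have "\<exists>N. \<forall>k\<ge>N. node (s @ [k]) \<subseteq> V"
    if s: "Suc D \<le> length s" "even (length s)" "p \<in> node s" for s
  proof -
    have "s \<noteq> []"
      using s(1) by auto
    have "(3 / 4 :: real) ^ (length s - 1) \<le> (3 / 4) ^ D"
      using s(1) by (intro power_decreasing) auto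
    with D interval_invariant[OF \<open>s \<noteq> []\<close>]
    have "snd (interval s) - fst (interval s) < e"
      by linarith
    moreover have "fst (interval s) \<le> p"
      using s(3) \<open>s \<noteq> []\<close> by (simp add: node_def halfopen_def)
    ultimately have "S \<inter> {p..<snd (interval s)} \<subseteq> V"
      using e(2) U(2) by auto
    then show ?thesis
      using even_node_children_eventually_above[OF \<open>s \<noteq> []\<close> s(2,3)] by blast
  qed
  then show ?thesis
    by blast
qed

theorem uniform_tree_sorgenfrey: "uniform_tree (subtopology sorgenfrey S) node"
proof unfold_locales
  show "node [] = topspace (subtopology sorgenfrey S)"
    by (simp add: node_def topspace_sorgenfrey)
qed (simp_all add: openin_node node_nonempty children_disjoint branch_singleton
  node_children_eventually_inside flip: node_eq_Union_children)

end

section \<open>Countable products\<close>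

locale countable_product_of_uniform_trees =
  fixes A :: "'a set" and X :: "'a \<Rightarrow> 'b topology" and F :: "'a \<Rightarrow> nat list \<Rightarrow> 'b set"
    and e :: "nat \<Rightarrow> 'a"
  assumes factor_tree: "\<alpha> \<in> A \<Longrightarrow> uniform_tree (X \<alpha>) (F \<alpha>)"
    and enumeration: "range e = A"
begin

definition active :: "nat \<Rightarrow> 'a set" where
  "active n = e ` {..n}"

definition moves :: "nat \<Rightarrow> ('a \<Rightarrow> nat \<times> nat) set" where
  "moves n = PiE (active n) (\<lambda>_. UNIV)"

definition least_digit :: "nat \<Rightarrow> ('a \<Rightarrow> nat \<times> nat) \<Rightarrow> nat" where
  "least_digit n t = Min ((\<lambda>\<alpha>. min (fst (t \<alpha>)) (snd (t \<alpha>))) ` active n)"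

definition moves_with_least :: "nat \<Rightarrow> nat \<Rightarrow> ('a \<Rightarrow> nat \<times> nat) set" where
  "moves_with_least n j = {t \<in> moves n. least_digit n t = j}"

definition enum_moves :: "nat \<Rightarrow> nat \<Rightarrow> nat \<Rightarrow> ('a \<Rightarrow> nat \<times> nat)" where
  "enum_moves n j = from_nat_into (moves_with_least n j)"

definition extend :: "nat \<Rightarrow> ('a \<Rightarrow> nat list) \<Rightarrow> ('a \<Rightarrow> nat \<times> nat) \<Rightarrow> ('a \<Rightarrow> nat list)" where
  "extend n \<sigma> t = (\<lambda>\<alpha>. if \<alpha> \<in> active n then \<sigma> \<alpha> @ [fst (t \<alpha>), snd (t \<alpha>)] else \<sigma> \<alpha>)"

fun follow :: "nat \<Rightarrow> ('a \<Rightarrow> nat list) \<Rightarrow> nat list \<Rightarrow> ('a \<Rightarrow> nat list)" where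
  "follow n \<sigma> (j # r # v) = follow (Suc n) (extend n \<sigma> (enum_moves n j r)) v"
| "follow n \<sigma> v = \<sigma>"

definition factor_nodes :: "nat list \<Rightarrow> ('a \<Rightarrow> nat list)" where
  "factor_nodes v = follow 0 (\<lambda>_. []) v"

definition cell :: "('a \<Rightarrow> nat list) \<Rightarrow> ('a \<Rightarrow> 'b) set" where
  "cell \<sigma> = PiE A (\<lambda>\<alpha>. F \<alpha> (\<sigma> \<alpha>))"

(* A node v of length 2n determines, for every factor, a node factor_nodes v of its tree; a move
   at stage n lets each of the factors e 0, ..., e n descend two levels. The son v @ [j] is the
   union of the cells of the moves with least digit j, and the sons of v @ [j] are these cells,
   enumerated by enum_moves. *)
definition product_node :: "nat list \<Rightarrow> ('a \<Rightarrow> 'b) set" where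
  "product_node v =
    (if even (length v) then cell (factor_nodes v)
     else (\<Union>t\<in>moves_with_least (length v div 2) (last v). cell (extend (length v div 2) (factor_nodes v) t)))"

lemma follow_append:
  "even (length v) \<Longrightarrow> follow n \<sigma> (v @ w) = follow (n + length v div 2) (follow n \<sigma> v) w"
  by (induction n \<sigma> v rule: follow.induct) auto

lemma follow_prefix: "prefix (\<sigma> \<alpha>) (follow n \<sigma> v \<alpha>)"
proof (induction n \<sigma> v rule: follow.induct)
  case (1 n \<sigma> j r v)
  have "prefix (\<sigma> \<alpha>) (extend n \<sigma> (enum_moves n j r) \<alpha>)"
    by (simp add: extend_def)
  with 1 show ?case
    using prefix_order.trans by fastforce
qed simp_all

lemma follow_unchanged: "\<alpha> \<notin> e ` {..<n + length v div 2} \<Longrightarrow> follow n \<sigma> v \<alpha> = \<sigma> \<alpha>"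
  by (induction n \<sigma> v rule: follow.induct) (auto simp: extend_def active_def)

lemma follow_length:
  "e m = \<alpha> \<Longrightarrow> length (\<sigma> \<alpha>) + 2 * (n + length v div 2 - max n m) \<le> length (follow n \<sigma> v \<alpha>)"
proof (induction n \<sigma> v rule: follow.induct)
  case (1 n \<sigma> j r v)
  have "length (\<sigma> \<alpha>) + 2 * (n + length (j # r # v) div 2 - max n m) \<le>
      length (extend n \<sigma> (enum_moves n j r) \<alpha>) + 2 * (Suc n + length v div 2 - max (Suc n) m)"
    using 1(2) by (cases "m \<le> n") (auto simp: extend_def active_def)
  with 1 show ?case
    by simp
qed auto

lemma follow_even: "(\<And>\<alpha>. even (length (\<sigma> \<alpha>))) \<Longrightarrow> even (length (follow n \<sigma> v \<alpha>))"
  by (induction n \<sigma> v rule: follow.induct) (auto simp: extend_def)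

lemma factor_nodes_snoc2:
  "even (length v) \<Longrightarrow>
    factor_nodes (v @ [j, r]) = extend (length v div 2) (factor_nodes v) (enum_moves (length v div 2) j r)"
  by (simp add: factor_nodes_def follow_append)

lemma factor_nodes_snoc1: "even (length v) \<Longrightarrow> factor_nodes (v @ [j]) = factor_nodes v"
  by (simp add: factor_nodes_def follow_append)

lemma finite_support_factor_nodes: "finite {\<alpha>. factor_nodes v \<alpha> \<noteq> []}"
proof -
  have "{\<alpha>. factor_nodes v \<alpha> \<noteq> []} \<subseteq> e ` {..<length v div 2}"
    using follow_unchanged[of _ 0 v] unfolding factor_nodes_def by auto
  then show ?thesis
    by (rule finite_subset) simp
qed

lemma factor_nodes_length: "e m = \<alpha> \<Longrightarrow> 2 * (length v div 2 - m) \<le> length (factor_nodes v \<alpha>)"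
  using follow_length[of m \<alpha> "\<lambda>_. []" 0 v] unfolding factor_nodes_def by simp

lemma even_length_factor_nodes: "even (length (factor_nodes v \<alpha>))"
  unfolding factor_nodes_def by (rule follow_even) simp

lemma factor_baire_tree: "\<alpha> \<in> A \<Longrightarrow> baire_tree (X \<alpha>) (F \<alpha>)"
  using factor_tree uniform_tree.axioms(1) by blast

lemma active_subset: "active n \<subseteq> A"
  unfolding active_def using enumeration by auto

lemma finite_active: "finite (active n)"
  unfolding active_def by simp

lemma enumerated_active: "m \<le> n \<Longrightarrow> e m \<in> active n"
  unfolding active_def by simp

lemma least_digit_le:
  assumes "t \<in> moves_with_least n j" and "\<alpha> \<in> active n"
  shows "j \<le> fst (t \<alpha>)" "j \<le> snd (t \<alpha>)"
proof -
  have "least_digit n t \<le> min (fst (t \<alpha>)) (snd (t \<alpha>))"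
    unfolding least_digit_def using assms(2) finite_active by (intro Min_le) auto
  then show "j \<le> fst (t \<alpha>)" "j \<le> snd (t \<alpha>)"
    using assms(1) unfolding moves_with_least_def by auto
qed

lemma infinite_moves_with_least: "infinite (moves_with_least n j)"
proof -
  define t where "t r = (\<lambda>\<alpha>. if \<alpha> \<in> active n then (j, if \<alpha> = e 0 then j + r else j) else undefined)"
    for r
  have "least_digit n (t r) = j" for r
  proof -
    have "(\<lambda>\<alpha>. min (fst (t r \<alpha>)) (snd (t r \<alpha>))) ` active n = {j}"
      using enumerated_active[of 0 n] unfolding t_def by auto
    then show ?thesis
      unfolding least_digit_def by simp
  qed
  then have "range t \<subseteq> moves_with_least n j"
    unfolding moves_with_least_def moves_def t_def by auto
  moreover have "inj t"
  proof (rule injI)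
    fix r r' assume "t r = t r'"
    then have "t r (e 0) = t r' (e 0)"
      by simp
    then show "r = r'"
      using enumerated_active[of 0 n] by (simp add: t_def)
  qed
  ultimately show ?thesis
    using infinite_super range_inj_infinite by blast
qed

lemma bij_enum_moves: "bij_betw (enum_moves n j) UNIV (moves_with_least n j)"
proof -
  have "countable (moves n)"
    unfolding moves_def by (rule countable_PiE[OF finite_active]) simp
  then have "countable (moves_with_least n j)"
    unfolding moves_with_least_def by (rule countable_subset[rotated]) auto
  then show ?thesis
    unfolding enum_moves_def using infinite_moves_with_least by (rule bij_betw_from_nat_into)
qed

lemma cell_eq_Union_extend: "cell \<sigma> = (\<Union>t\<in>moves n. cell (extend n \<sigma> t))"
proof (intro equalityI subsetI)
  fix x assume x: "x \<in> cell \<sigma>"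
  have "\<exists>kl. x \<alpha> \<in> F \<alpha> (\<sigma> \<alpha> @ [fst kl, snd kl])" if "\<alpha> \<in> A" for \<alpha>
    using baire_tree.in_some_grandchild[OF factor_baire_tree[OF that]] x that by (fastforce simp: cell_def)
  then obtain t where t: "\<And>\<alpha>. \<alpha> \<in> A \<Longrightarrow> x \<alpha> \<in> F \<alpha> (\<sigma> \<alpha> @ [fst (t \<alpha>), snd (t \<alpha>)])"
    by metis
  have "restrict t (active n) \<in> moves n"
    unfolding moves_def by simp
  moreover have "x \<in> cell (extend n \<sigma> (restrict t (active n)))"
    using x t active_subset by (auto simp: cell_def extend_def PiE_iff)
  ultimately show "x \<in> (\<Union>t\<in>moves n. cell (extend n \<sigma> t))"
    by blast
next
  fix x assume "x \<in> (\<Union>t\<in>moves n. cell (extend n \<sigma> t))"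
  moreover have "F \<alpha> (extend n \<sigma> t \<alpha>) \<subseteq> F \<alpha> (\<sigma> \<alpha>)" if "\<alpha> \<in> A" for \<alpha> t
    using baire_tree.node_antimono[OF factor_baire_tree[OF that]] by (simp add: extend_def)
  ultimately show "x \<in> cell \<sigma>"
    by (fastforce simp: cell_def PiE_iff)
qed

lemma cell_extend_disjoint:
  assumes "t \<in> moves n" "t' \<in> moves n" "t \<noteq> t'"
  shows "cell (extend n \<sigma> t) \<inter> cell (extend n \<sigma> t') = {}"
proof -
  obtain \<alpha> where \<alpha>: "\<alpha> \<in> active n" "t \<alpha> \<noteq> t' \<alpha>"
    using assms unfolding moves_def by (metis PiE_ext UNIV_I)
  then have "\<alpha> \<in> A"
    using active_subset by blast
  have "(fst (t \<alpha>), snd (t \<alpha>)) \<noteq> (fst (t' \<alpha>), snd (t' \<alpha>))"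
    using \<alpha>(2) by (simp add: prod_eq_iff)
  then have "F \<alpha> (\<sigma> \<alpha> @ [fst (t \<alpha>), snd (t \<alpha>)]) \<inter> F \<alpha> (\<sigma> \<alpha> @ [fst (t' \<alpha>), snd (t' \<alpha>)]) = {}"
    by (rule baire_tree.grandchildren_disjoint[OF factor_baire_tree[OF \<open>\<alpha> \<in> A\<close>]])
  moreover have "x \<alpha> \<in> F \<alpha> (extend n \<sigma> t \<alpha>)" "x \<alpha> \<in> F \<alpha> (extend n \<sigma> t' \<alpha>)"
    if "x \<in> cell (extend n \<sigma> t) \<inter> cell (extend n \<sigma> t')" for x
    using that \<open>\<alpha> \<in> A\<close> by (auto simp: cell_def PiE_iff)
  ultimately show ?thesis
    using \<alpha>(1) by (auto simp: extend_def)
qed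

lemma cell_nonempty: "cell \<sigma> \<noteq> {}"
  unfolding cell_def PiE_eq_empty_iff using uniform_tree.node_nonempty[OF factor_tree] by blast

lemma openin_cell:
  assumes "finite {\<alpha>. \<sigma> \<alpha> \<noteq> []}"
  shows "openin (product_topology X A) (cell \<sigma>)"
  unfolding cell_def openin_PiE_gen
proof (intro disjI2 conjI ballI)
  have "{\<alpha> \<in> A. F \<alpha> (\<sigma> \<alpha>) \<noteq> topspace (X \<alpha>)} \<subseteq> {\<alpha>. \<sigma> \<alpha> \<noteq> []}"
    using baire_tree.root_eq_topspace[OF factor_baire_tree] by auto
  then show "finite {\<alpha> \<in> A. F \<alpha> (\<sigma> \<alpha>) \<noteq> topspace (X \<alpha>)}"
    using assms by (rule finite_subset)
qed (rule baire_tree.openin_node[OF factor_baire_tree])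

lemma product_node_even: "even (length v) \<Longrightarrow> product_node v = cell (factor_nodes v)"
  unfolding product_node_def by simp

lemma product_node_odd:
  "even (length v) \<Longrightarrow>
    product_node (v @ [j]) = (\<Union>t\<in>moves_with_least (length v div 2) j. cell (extend (length v div 2) (factor_nodes v) t))"
  unfolding product_node_def by (simp add: factor_nodes_snoc1)

lemma product_node_snoc2:
  "even (length v) \<Longrightarrow>
    product_node (v @ [j, r]) = cell (extend (length v div 2) (factor_nodes v) (enum_moves (length v div 2) j r))"
  using product_node_even[of "v @ [j, r]"] factor_nodes_snoc2[of v j r] by simp

lemma odd_length_snocE:
  assumes "odd (length v)"
  obtains w j where "v = w @ [j]" "even (length w)"
  using assms by (cases v rule: rev_cases) auto

lemma product_node_eq_Union_children: "product_node v = (\<Union>k. product_node (v @ [k]))"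
proof (cases "even (length v)")
  case True
  let ?n = "length v div 2"
  have "(\<Union>k. product_node (v @ [k])) = (\<Union>t\<in>(\<Union>k. moves_with_least ?n k). cell (extend ?n (factor_nodes v) t))"
    using product_node_odd[OF True] by auto
  also have "(\<Union>k. moves_with_least ?n k) = moves ?n"
    unfolding moves_with_least_def by auto
  finally show ?thesis
    using product_node_even[OF True] cell_eq_Union_extend by simp
next
  case False
  then obtain w j where v: "v = w @ [j]" and w: "even (length w)"
    by (rule odd_length_snocE)
  let ?n = "length w div 2"
  have "(\<Union>k. product_node (v @ [k])) = (\<Union>t\<in>range (enum_moves ?n j). cell (extend ?n (factor_nodes w) t))"
    unfolding v using product_node_snoc2[OF w] by simp
  also have "\<dots> = product_node v"
    unfolding v product_node_odd[OF w] using bij_enum_moves[of ?n j] by (simp add: bij_betw_def)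
  finally show ?thesis ..
qed

lemma product_node_children_disjoint:
  assumes "k \<noteq> l"
  shows "product_node (v @ [k]) \<inter> product_node (v @ [l]) = {}"
proof (cases "even (length v)")
  case True
  have "t \<noteq> t'" "t \<in> moves (length v div 2)" "t' \<in> moves (length v div 2)"
    if "t \<in> moves_with_least (length v div 2) k" "t' \<in> moves_with_least (length v div 2) l" for t t'
    using that assms unfolding moves_with_least_def by auto
  then show ?thesis
    unfolding product_node_odd[OF True] using cell_extend_disjoint by blast
next
  case False
  then obtain w j where v: "v = w @ [j]" and w: "even (length w)"
    by (rule odd_length_snocE)
  let ?n = "length w div 2"
  have "enum_moves ?n j k \<noteq> enum_moves ?n j l"
    using bij_betw_imp_inj_on[OF bij_enum_moves] assms by (auto dest: injD)
  moreover have "enum_moves ?n j i \<in> moves ?n" for i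
    using bij_betw_apply[OF bij_enum_moves] unfolding moves_with_least_def by blast
  ultimately show ?thesis
    unfolding v using product_node_snoc2[OF w] cell_extend_disjoint by simp
qed

lemma openin_product_node: "openin (product_topology X A) (product_node v)"
proof (cases "even (length v)")
  case True
  then show ?thesis
    using openin_cell[OF finite_support_factor_nodes] by (simp add: product_node_even)
next
  case False
  have "finite {\<alpha>. extend n \<sigma> t \<alpha> \<noteq> []}" if "finite {\<alpha>. \<sigma> \<alpha> \<noteq> []}" for n \<sigma> t
  proof -
    have "{\<alpha>. extend n \<sigma> t \<alpha> \<noteq> []} \<subseteq> {\<alpha>. \<sigma> \<alpha> \<noteq> []} \<union> active n"
      unfolding extend_def by auto
    then show ?thesis
      using that finite_active by (meson finite_UnI finite_subset)
  qed
  then show ?thesis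
    using False finite_support_factor_nodes unfolding product_node_def
    by (auto intro!: openin_Union openin_cell)
qed

lemma product_node_root: "product_node [] = topspace (product_topology X A)"
proof -
  have "product_node [] = PiE A (\<lambda>\<alpha>. F \<alpha> [])"
    by (simp add: product_node_def factor_nodes_def cell_def)
  also have "\<dots> = PiE A (\<lambda>\<alpha>. topspace (X \<alpha>))"
    using baire_tree.root_eq_topspace[OF factor_baire_tree] by (rule PiE_cong)
  finally show ?thesis
    by (simp add: topspace_product_topology)
qed

lemma Inter_product_nodes_eq_Inter_cells:
  "(\<Inter>n. product_node (map g [0..<n])) = (\<Inter>N. cell (factor_nodes (map g [0..<2 * N])))"
proof (intro equalityI INT_greatest)
  fix N
  show "(\<Inter>n. product_node (map g [0..<n])) \<subseteq> cell (factor_nodes (map g [0..<2 * N]))"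
    using INT_lower[of "2 * N" UNIV "\<lambda>n. product_node (map g [0..<n])"] by (simp add: product_node_even)
next
  fix n
  have "map g [0..<2 * n] = map g [0..<n] @ map g [n..<2 * n]"
    using upt_add_eq_append[of 0 n n] by (simp add: mult_2)
  then have "prefix (map g [0..<n]) (map g [0..<2 * n])"
    by simp
  then have "product_node (map g [0..<2 * n]) \<subseteq> product_node (map g [0..<n])"
    by (rule antimono_if_eq_Union_children[OF product_node_eq_Union_children])
  then have "cell (factor_nodes (map g [0..<2 * n])) \<subseteq> product_node (map g [0..<n])"
    by (simp add: product_node_even)
  then show "(\<Inter>N. cell (factor_nodes (map g [0..<2 * N]))) \<subseteq> product_node (map g [0..<n])"
    by blast
qed

lemma factor_nodes_Inter_singleton:
  assumes "\<alpha> \<in> A"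
  shows "\<exists>q. (\<Inter>N. F \<alpha> (factor_nodes (map g [0..<2 * N]) \<alpha>)) = {q}"
proof (rule baire_tree.Inter_prefix_chain_singleton[OF factor_baire_tree[OF assms]])
  fix N M :: nat assume "N \<le> M"
  then have "map g [0..<2 * M] = map g [0..<2 * N] @ map g [2 * N..<2 * M]"
    using upt_add_eq_append[of 0 "2 * N" "2 * M - 2 * N"] by simp
  then show "prefix (factor_nodes (map g [0..<2 * N]) \<alpha>) (factor_nodes (map g [0..<2 * M]) \<alpha>)"
    unfolding factor_nodes_def by (simp add: follow_append follow_prefix)
next
  fix k
  obtain m where "e m = \<alpha>"
    using assms enumeration by blast
  then have "k \<le> length (factor_nodes (map g [0..<2 * (m + k)]) \<alpha>)"
    using factor_nodes_length[of m \<alpha> "map g [0..<2 * (m + k)]"] by simp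
  then show "\<exists>M. k \<le> length (factor_nodes (map g [0..<2 * M]) \<alpha>)" ..
qed

lemma product_node_branch_singleton: "\<exists>p. (\<Inter>n. product_node (map g [0..<n])) = {p}"
proof -
  have "\<forall>\<alpha>\<in>A. \<exists>q. (\<Inter>N. F \<alpha> (factor_nodes (map g [0..<2 * N]) \<alpha>)) = {q}"
    by (intro ballI factor_nodes_Inter_singleton)
  then obtain q where q: "\<forall>\<alpha>\<in>A. (\<Inter>N. F \<alpha> (factor_nodes (map g [0..<2 * N]) \<alpha>)) = {q \<alpha>}"
    by (rule bchoice[THEN exE])
  have "(\<Inter>N. cell (factor_nodes (map g [0..<2 * N]))) =
      PiE A (\<lambda>\<alpha>. \<Inter>N. F \<alpha> (factor_nodes (map g [0..<2 * N]) \<alpha>))"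
    unfolding cell_def by (auto simp: PiE_iff)
  also have "\<dots> = PiE A (\<lambda>\<alpha>. {restrict q A \<alpha>})"
    by (rule PiE_cong) (simp add: q)
  also have "\<dots> = {restrict q A}"
    by (rule PiE_singleton[OF restrict_extensional])
  finally show ?thesis
    unfolding Inter_product_nodes_eq_Inter_cells by (rule exI[of _ "restrict q A"])
qed

sublocale product: baire_tree "product_topology X A" product_node
  by unfold_locales (simp_all add: openin_product_node product_node_root product_node_children_disjoint
    product_node_branch_singleton flip: product_node_eq_Union_children)

lemma product_node_nonempty: "product_node v \<noteq> {}"
proof (cases "even (length v)")
  case True
  then show ?thesis
    using cell_nonempty by (simp add: product_node_even)
next
  case False
  then obtain w j where v: "v = w @ [j]" and w: "even (length w)"
    by (rule odd_length_snocE)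
  obtain t where "t \<in> moves_with_least (length w div 2) j"
    using infinite_moves_with_least by (metis finite.emptyI ex_in_conv)
  then show ?thesis
    using cell_nonempty unfolding v product_node_odd[OF w] by blast
qed

lemma odd_children_inside_box:
  assumes v: "even (length v)" and "M \<le> j"
    and box: "\<And>\<alpha>. \<alpha> \<in> A \<Longrightarrow> W \<alpha> \<noteq> topspace (X \<alpha>) \<Longrightarrow>
      \<alpha> \<in> active (length v div 2) \<and> (\<forall>k\<ge>M. F \<alpha> (factor_nodes v \<alpha> @ [k]) \<subseteq> W \<alpha>)"
  shows "product_node (v @ [j]) \<subseteq> PiE A W"
proof
  fix x assume "x \<in> product_node (v @ [j])"
  then obtain t where t: "t \<in> moves_with_least (length v div 2) j"
    and x: "x \<in> cell (extend (length v div 2) (factor_nodes v) t)"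
    unfolding product_node_odd[OF v] by blast
  have "x \<alpha> \<in> W \<alpha>" if \<alpha>: "\<alpha> \<in> A" for \<alpha>
  proof -
    have x\<alpha>: "x \<alpha> \<in> F \<alpha> (extend (length v div 2) (factor_nodes v) t \<alpha>)"
      using x \<alpha> by (auto simp: cell_def PiE_iff)
    show ?thesis
    proof (cases "W \<alpha> = topspace (X \<alpha>)")
      case True
      then show ?thesis
        using x\<alpha> baire_tree.node_subset_topspace[OF factor_baire_tree[OF \<alpha>]] by blast
    next
      case False
      with box[OF \<alpha>] have act: "\<alpha> \<in> active (length v div 2)"
        and inside: "\<forall>k\<ge>M. F \<alpha> (factor_nodes v \<alpha> @ [k]) \<subseteq> W \<alpha>"
        by auto
      have "x \<alpha> \<in> F \<alpha> ((factor_nodes v \<alpha> @ [fst (t \<alpha>)]) @ [snd (t \<alpha>)])"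
        using x\<alpha> act by (simp add: extend_def)
      also have "\<dots> \<subseteq> F \<alpha> (factor_nodes v \<alpha> @ [fst (t \<alpha>)])"
        by (rule baire_tree.node_antimono[OF factor_baire_tree[OF \<alpha>]]) simp
      also have "\<dots> \<subseteq> W \<alpha>"
        using inside least_digit_le(1)[OF t act] \<open>M \<le> j\<close> by auto
      finally show ?thesis .
    qed
  qed
  moreover have "x \<in> extensional A"
    using x by (simp add: cell_def PiE_def)
  ultimately show "x \<in> PiE A W"
    by (simp add: PiE_def)
qed

lemma deep_product_nodes_eventually_inside:
  assumes p: "p \<in> topspace (product_topology X A)" and "\<alpha> \<in> A" "openin (X \<alpha>) W" "p \<alpha> \<in> W"
  shows "\<forall>\<^sub>F d in sequentially. \<alpha> \<in> active d \<and> (\<forall>v. length v = 2 * d \<longrightarrow> p \<in> product_node v \<longrightarrow>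
    (\<forall>\<^sub>F k in sequentially. F \<alpha> (factor_nodes v \<alpha> @ [k]) \<subseteq> W))"
proof -
  obtain m where m: "e m = \<alpha>"
    using assms(2) enumeration by blast
  have "p \<alpha> \<in> topspace (X \<alpha>)"
    using p assms(2) by (auto simp: topspace_product_topology PiE_iff)
  then obtain D where D: "\<forall>s. D \<le> length s \<longrightarrow> even (length s) \<longrightarrow> p \<alpha> \<in> F \<alpha> s \<longrightarrow>
      (\<exists>N. \<forall>k\<ge>N. F \<alpha> (s @ [k]) \<subseteq> W)"
    using uniform_tree.even_children_eventually_inside[OF factor_tree[OF assms(2)]] assms(3,4) by blast
  have "\<alpha> \<in> active d \<and> (\<forall>v. length v = 2 * d \<longrightarrow> p \<in> product_node v \<longrightarrow>
      (\<forall>\<^sub>F k in sequentially. F \<alpha> (factor_nodes v \<alpha> @ [k]) \<subseteq> W))" if "m + D \<le> d" for d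
  proof (intro conjI allI impI)
    show "\<alpha> \<in> active d"
      using enumerated_active[of m d] m that by simp
    fix v assume v: "length v = 2 * d" "p \<in> product_node v"
    have "D \<le> length (factor_nodes v \<alpha>)"
      using factor_nodes_length[OF m, of v] v(1) that by simp
    moreover have "p \<alpha> \<in> F \<alpha> (factor_nodes v \<alpha>)"
      using v assms(2) by (auto simp: product_node_even cell_def PiE_iff)
    ultimately show "\<forall>\<^sub>F k in sequentially. F \<alpha> (factor_nodes v \<alpha> @ [k]) \<subseteq> W"
      using D even_length_factor_nodes unfolding eventually_sequentially by blast
  qed
  then show ?thesis
    unfolding eventually_sequentially by blast
qed

lemma exists_deep_node:
  assumes p: "p \<in> topspace (product_topology X A)" and K: "finite K" "K \<subseteq> A"
    and W: "\<And>\<alpha>. \<alpha> \<in> K \<Longrightarrow> openin (X \<alpha>) (W \<alpha>) \<and> p \<alpha> \<in> W \<alpha>"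
  shows "\<exists>v M. even (length v) \<and> p \<in> product_node v \<and>
    (\<forall>\<alpha>\<in>K. \<alpha> \<in> active (length v div 2) \<and> (\<forall>k\<ge>M. F \<alpha> (factor_nodes v \<alpha> @ [k]) \<subseteq> W \<alpha>))"
proof -
  have "\<forall>\<^sub>F d in sequentially. \<forall>\<alpha>\<in>K. \<alpha> \<in> active d \<and> (\<forall>v. length v = 2 * d \<longrightarrow>
      p \<in> product_node v \<longrightarrow> (\<forall>\<^sub>F k in sequentially. F \<alpha> (factor_nodes v \<alpha> @ [k]) \<subseteq> W \<alpha>))"
    using K W by (intro eventually_ball_finite ballI deep_product_nodes_eventually_inside[OF p]) auto
  then obtain d where d: "\<forall>\<alpha>\<in>K. \<alpha> \<in> active d \<and> (\<forall>v. length v = 2 * d \<longrightarrow>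
      p \<in> product_node v \<longrightarrow> (\<forall>\<^sub>F k in sequentially. F \<alpha> (factor_nodes v \<alpha> @ [k]) \<subseteq> W \<alpha>))"
    unfolding eventually_sequentially by blast
  obtain v where v: "length v = 2 * d" "p \<in> product_node v"
    using product.node_of_length p by blast
  have "\<forall>\<^sub>F k in sequentially. \<forall>\<alpha>\<in>K. F \<alpha> (factor_nodes v \<alpha> @ [k]) \<subseteq> W \<alpha>"
    using d v by (intro eventually_ball_finite[OF K(1)]) blast
  then obtain M where "\<forall>k\<ge>M. \<forall>\<alpha>\<in>K. F \<alpha> (factor_nodes v \<alpha> @ [k]) \<subseteq> W \<alpha>"
    unfolding eventually_sequentially by blast
  with d v show ?thesis
    by (intro exI[of _ v] exI[of _ M]) auto
qed

lemma product_node_grows: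
  assumes p: "p \<in> topspace (product_topology X A)"
    and U: "openin (product_topology X A) U" "p \<in> U"
  shows "\<exists>z N. p \<in> product_node z \<and> product_node (z @ [N]) \<noteq> {} \<and> (\<forall>j\<ge>N. product_node (z @ [j]) \<subseteq> U)"
proof -
  obtain W where W: "finite {\<alpha> \<in> A. W \<alpha> \<noteq> topspace (X \<alpha>)}" "\<forall>\<alpha>\<in>A. openin (X \<alpha>) (W \<alpha>)"
    "p \<in> PiE A W" "PiE A W \<subseteq> U"
    using bspec[OF iffD1[OF openin_product_topology_alt U(1)] U(2)] by blast
  let ?K = "{\<alpha> \<in> A. W \<alpha> \<noteq> topspace (X \<alpha>)}"
  have "openin (X \<alpha>) (W \<alpha>) \<and> p \<alpha> \<in> W \<alpha>" if "\<alpha> \<in> ?K" for \<alpha>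
    using W(2,3) that by (auto simp: PiE_iff)
  then have "\<exists>v M. even (length v) \<and> p \<in> product_node v \<and>
      (\<forall>\<alpha>\<in>?K. \<alpha> \<in> active (length v div 2) \<and> (\<forall>k\<ge>M. F \<alpha> (factor_nodes v \<alpha> @ [k]) \<subseteq> W \<alpha>))"
    by (intro exists_deep_node[OF p W(1)]) auto
  then obtain v M where v: "even (length v)" "p \<in> product_node v"
    and inside: "\<forall>\<alpha>\<in>?K. \<alpha> \<in> active (length v div 2) \<and> (\<forall>k\<ge>M. F \<alpha> (factor_nodes v \<alpha> @ [k]) \<subseteq> W \<alpha>)"
    by blast
  have "product_node (v @ [j]) \<subseteq> PiE A W" if "M \<le> j" for j
    using inside by (intro odd_children_inside_box[OF v(1) that]) simp
  then have "\<forall>j\<ge>M. product_node (v @ [j]) \<subseteq> U"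
    using W(4) by blast
  with v(2) product_node_nonempty show ?thesis
    by blast
qed

lemma has_pi_tree: "has_pi_tree (product_topology X A)"
  using product_node_grows by (rule product.has_pi_tree)

end

lemma exists_uniform_tree:
  assumes "Y homeomorphic_space baire_space \<or>
    (\<exists>S. countable (UNIV - S) \<and> Y homeomorphic_space subtopology sorgenfrey S)"
  shows "\<exists>F. uniform_tree Y F"
  using assms
proof (elim disjE exE conjE)
  assume "Y homeomorphic_space baire_space"
  then show ?thesis
    using uniform_tree_baire_space uniform_tree_homeomorphic_space by (metis homeomorphic_space_sym)
next
  fix S assume "countable (UNIV - S)" "Y homeomorphic_space subtopology sorgenfrey S"
  then show ?thesis
    using cocountable_reals.uniform_tree_sorgenfrey[of S] uniform_tree_homeomorphic_space
    by (metis Compl_eq_Diff_UNIV cocountable_reals.intro homeomorphic_space_sym)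
qed

theorem corollary20:
  fixes A :: "'a set" and X :: "'a \<Rightarrow> 'b topology"
  assumes "A \<noteq> {}" and "countable A"
    and "\<forall>\<alpha>\<in>A. X \<alpha> homeomorphic_space baire_space \<or>
           (\<exists>S. countable (UNIV - S) \<and> X \<alpha> homeomorphic_space subtopology sorgenfrey S)"
  shows "has_pi_tree (product_topology X A)"
proof -
  have "\<forall>\<alpha>\<in>A. \<exists>F. uniform_tree (X \<alpha>) F"
    using assms(3) exists_uniform_tree by blast
  then obtain F where "\<forall>\<alpha>\<in>A. uniform_tree (X \<alpha>) (F \<alpha>)"
    by (rule bchoice[THEN exE])
  then have "countable_product_of_uniform_trees A X F (from_nat_into A)"
    using assms(1,2) by (intro countable_product_of_uniform_trees.intro) auto
  then show ?thesis
    by (rule countable_product_of_uniform_trees.has_pi_tree)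
qed

end
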